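(* Let $(M,D,g,T)$ be a chronologically open sub-space-time. Then the set $\mathscr{B}=\{I^+(p)\cap I^-(q)\mid p,q\in M\}$ is the basis of a topology on $M$.
   Context: A sub-space-time is a quadruple $(M,D,g,T)$ where $M$ is a connected smooth manifold, $D$ is a smooth bracket-generating distribution on $M$ of rank $k$ with $2\le k<\dim M$, $g$ is a smoothly varying non-degenerate symmetric bilinear form on the fibres $D_p$ of index $1$, and $T$ is a globally defined smooth horizontal vector field with $g(T,T)<0$. A horizontal curve is an absolutely continuous curve with $\dot\gamma\in D$ a.e. and $\dot\gamma$ locally square integrable w.r.t. an auxiliary Riemannian metric; it is timelike future directed (t.f.d.) if a.e. $g(\dot\gamma,\dot\gamma)<0$ and $g(T,\dot\gamma)<0$. $p\ll q$ means there is a horizontal t.f.d. curve from $p$ to $q$; $I^+(p)=\{q:p\ll q\}$, $I^-(p)=\{q:q\ll p\}$. The sub-space-time is chronologically open if $I^+(p)$ and $I^-(p)$ are open in the manifold topology for all $p\in M$. *)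

theory Defs
  imports "HOL-Analysis.Analysis"
begin

text \<open>Smooth manifolds are modelled as embedded smooth submanifolds of a
Euclidean space 'e (no loss of generality by the Whitney embedding theorem).\<close>

fun Ck_on :: "nat \<Rightarrow> 'a::euclidean_space set \<Rightarrow> ('a \<Rightarrow> 'b::real_normed_vector) \<Rightarrow> bool" where
  "Ck_on 0 U f = continuous_on U f"
| "Ck_on (Suc k) U f = (\<exists>f'. (\<forall>x\<in>U. (f has_derivative f' x) (at x)) \<and> (\<forall>v. Ck_on k U (\<lambda>x. f' x v)))"

definition smooth_on :: "'a::euclidean_space set \<Rightarrow> ('a \<Rightarrow> 'b::real_normed_vector) \<Rightarrow> bool" where
  "smooth_on U f \<longleftrightarrow> (\<forall>k. Ck_on k U f)"

definition smooth_fun_on :: "'a::euclidean_space set \<Rightarrow> ('a \<Rightarrow> 'b::real_normed_vector) \<Rightarrow> bool" where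
  "smooth_fun_on S f \<longleftrightarrow> (\<forall>p\<in>S. \<exists>U h. open U \<and> p \<in> U \<and> smooth_on U h \<and> (\<forall>q\<in>S \<inter> U. f q = h q))"

definition submanifold :: "'d::euclidean_space itself \<Rightarrow> 'e::euclidean_space set \<Rightarrow> bool" where
  "submanifold _ M \<longleftrightarrow> (\<forall>p\<in>M. \<exists>(V::'d set) U \<phi> \<psi>. open V \<and> open U \<and> p \<in> U \<and>
      smooth_on V \<phi> \<and> (\<forall>x\<in>V. inj (frechet_derivative \<phi> (at x))) \<and>
      homeomorphism V (M \<inter> U) \<phi> \<psi>)"

definition tangent_space :: "'e::euclidean_space set \<Rightarrow> 'e \<Rightarrow> 'e set" where
  "tangent_space M p = {v. \<exists>c. c 0 = p \<and> (\<forall>t\<in>{-1<..<1}. c t \<in> M) \<and> (c has_vector_derivative v) (at 0)}"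

definition lie :: "('e::euclidean_space \<Rightarrow> 'e) \<Rightarrow> ('e \<Rightarrow> 'e) \<Rightarrow> 'e \<Rightarrow> 'e" where
  "lie X Y x = frechet_derivative Y (at x) (X x) - frechet_derivative X (at x) (Y x)"

inductive_set brackets :: "(nat \<Rightarrow> 'e::euclidean_space \<Rightarrow> 'e) \<Rightarrow> nat \<Rightarrow> ('e \<Rightarrow> 'e) set"
  for X k where
  gen: "i < k \<Longrightarrow> X i \<in> brackets X k"
| br: "Y \<in> brackets X k \<Longrightarrow> Z \<in> brackets X k \<Longrightarrow> lie Y Z \<in> brackets X k"

definition local_frame :: "'e::euclidean_space set \<Rightarrow> ('e \<Rightarrow> 'e set) \<Rightarrow> nat \<Rightarrow> 'e \<Rightarrow> 'e set \<Rightarrow> (nat \<Rightarrow> 'e \<Rightarrow> 'e) \<Rightarrow> bool" where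
  "local_frame M D k p U X \<longleftrightarrow> open U \<and> p \<in> U \<and> (\<forall>i<k. smooth_on U (X i)) \<and>
     (\<forall>q\<in>M \<inter> U. D q = span {X i q | i. i < k})"

definition smooth_distribution :: "'e::euclidean_space set \<Rightarrow> ('e \<Rightarrow> 'e set) \<Rightarrow> nat \<Rightarrow> bool" where
  "smooth_distribution M D k \<longleftrightarrow>
     (\<forall>p\<in>M. subspace (D p) \<and> D p \<subseteq> tangent_space M p \<and> dim (D p) = k) \<and>
     (\<forall>p\<in>M. \<exists>U X. local_frame M D k p U X)"

definition bracket_generating :: "'e::euclidean_space set \<Rightarrow> ('e \<Rightarrow> 'e set) \<Rightarrow> nat \<Rightarrow> bool" where
  "bracket_generating M D k \<longleftrightarrow>
     (\<forall>p\<in>M. \<exists>U X. local_frame M D k p U X \<and> span {Z p | Z. Z \<in> brackets X k} = tangent_space M p)"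

definition sub_lorentz_metric :: "'e::euclidean_space set \<Rightarrow> ('e \<Rightarrow> 'e set) \<Rightarrow> ('e \<Rightarrow> 'e \<Rightarrow> 'e \<Rightarrow> real) \<Rightarrow> bool" where
  "sub_lorentz_metric M D g \<longleftrightarrow>
    (\<forall>p\<in>M.
       (\<forall>u\<in>D p. \<forall>v\<in>D p. \<forall>w\<in>D p. \<forall>c::real.
          g p (u + v) w = g p u w + g p v w \<and> g p (c *\<^sub>R u) w = c * g p u w \<and> g p u v = g p v u) \<and>
       (\<forall>u\<in>D p. (\<forall>v\<in>D p. g p u v = 0) \<longrightarrow> u = 0) \<and>
       (\<exists>w\<in>D p. g p w w < 0) \<and>
       (\<forall>W. subspace W \<and> W \<subseteq> D p \<and> (\<forall>w\<in>W. w \<noteq> 0 \<longrightarrow> g p w w < 0) \<longrightarrow> dim W \<le> 1)) \<and>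
    (\<forall>U X Y. open U \<longrightarrow> smooth_on U X \<longrightarrow> smooth_on U Y \<longrightarrow>
       (\<forall>q\<in>M \<inter> U. X q \<in> D q \<and> Y q \<in> D q) \<longrightarrow>
       smooth_fun_on (M \<inter> U) (\<lambda>q. g q (X q) (Y q)))"

definition sub_space_time :: "'d::euclidean_space itself \<Rightarrow> 'e::euclidean_space set \<Rightarrow> ('e \<Rightarrow> 'e set) \<Rightarrow> nat \<Rightarrow>
    ('e \<Rightarrow> 'e \<Rightarrow> 'e \<Rightarrow> real) \<Rightarrow> ('e \<Rightarrow> 'e) \<Rightarrow> bool" where
  "sub_space_time d M D k g T \<longleftrightarrow>
     submanifold d M \<and> connected M \<and> 2 \<le> k \<and> k < DIM('d) \<and>
     smooth_distribution M D k \<and> bracket_generating M D k \<and> sub_lorentz_metric M D g \<and>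
     smooth_fun_on M T \<and> (\<forall>p\<in>M. T p \<in> D p \<and> g p (T p) (T p) < 0)"

definition abs_continuous_on :: "real \<Rightarrow> real \<Rightarrow> (real \<Rightarrow> 'e::metric_space) \<Rightarrow> bool" where
  "abs_continuous_on a b \<gamma> \<longleftrightarrow> (\<forall>\<epsilon>>0. \<exists>\<delta>>0. \<forall>n (s::nat \<Rightarrow> real) t.
     (\<forall>i<n. a \<le> s i \<and> s i \<le> t i \<and> t i \<le> b) \<and>
     (\<forall>i<n. \<forall>j<n. i \<noteq> j \<longrightarrow> t i \<le> s j \<or> t j \<le> s i) \<and>
     (\<Sum>i<n. t i - s i) < \<delta> \<longrightarrow> (\<Sum>i<n. dist (\<gamma> (s i)) (\<gamma> (t i))) < \<epsilon>)"

text \<open>Horizontal timelike future directed curve on [a,b]; on a compact interval,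
local square integrability w.r.t. any Riemannian metric is square integrability
of the Euclidean norm of the derivative.\<close>
definition tfd_curve :: "'e::euclidean_space set \<Rightarrow> ('e \<Rightarrow> 'e set) \<Rightarrow> ('e \<Rightarrow> 'e \<Rightarrow> 'e \<Rightarrow> real) \<Rightarrow> ('e \<Rightarrow> 'e) \<Rightarrow>
    real \<Rightarrow> real \<Rightarrow> (real \<Rightarrow> 'e) \<Rightarrow> bool" where
  "tfd_curve M D g T a b \<gamma> \<longleftrightarrow> \<gamma> ` {a..b} \<subseteq> M \<and> abs_continuous_on a b \<gamma> \<and>
     (\<exists>\<gamma>'. set_integrable lborel {a..b} (\<lambda>t. (norm (\<gamma>' t))\<^sup>2) \<and>
        (AE t in lborel. t \<in> {a..b} \<longrightarrow>
           (\<gamma> has_vector_derivative \<gamma>' t) (at t) \<and> \<gamma>' t \<in> D (\<gamma> t) \<and>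
           g (\<gamma> t) (\<gamma>' t) (\<gamma>' t) < 0 \<and> g (\<gamma> t) (T (\<gamma> t)) (\<gamma>' t) < 0))"

definition chron :: "'e::euclidean_space set \<Rightarrow> ('e \<Rightarrow> 'e set) \<Rightarrow> ('e \<Rightarrow> 'e \<Rightarrow> 'e \<Rightarrow> real) \<Rightarrow> ('e \<Rightarrow> 'e) \<Rightarrow>
    'e \<Rightarrow> 'e \<Rightarrow> bool" where
  "chron M D g T p q \<longleftrightarrow> (\<exists>a b \<gamma>. a < b \<and> tfd_curve M D g T a b \<gamma> \<and> \<gamma> a = p \<and> \<gamma> b = q)"

definition Ifut where "Ifut M D g T p = {q. chron M D g T p q}"
definition Ipast where "Ipast M D g T p = {q. chron M D g T q p}"

definition chronologically_open where
  "chronologically_open M D g T \<longleftrightarrow>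
     (\<forall>p\<in>M. openin (top_of_set M) (Ifut M D g T p) \<and> openin (top_of_set M) (Ipast M D g T p))"

end

theory Submission
  imports Defs
begin

text \<open>
  A family of sets is a base of a topology on its union as soon as every point of the intersection
  of two members lies in a member contained in that intersection. For the diamonds
  \<open>I\<^sup>+(p) \<inter> I\<^sup>-(q)\<close> this follows from chronological openness: if \<open>x \<in> I\<^sup>+(p\<^sub>1) \<inter> I\<^sup>+(p\<^sub>2)\<close>,
  that open set contains a point \<open>p\<close> slightly before \<open>x\<close> on the timelike curve from \<open>p\<^sub>1\<close> to \<open>x\<close>,
  and symmetrically there is \<open>q\<close> slightly after \<open>x\<close> in \<open>I\<^sup>-(q\<^sub>1) \<inter> I\<^sup>-(q\<^sub>2)\<close>; by transitivity
  of \<open>\<lless>\<close> the diamond \<open>I\<^sup>+(p) \<inter> I\<^sup>-(q)\<close> contains \<open>x\<close> and lies in both given diamonds.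
  The diamonds cover \<open>M\<close> because through every point runs the integral curve of the timelike
  field \<open>T\<close>, a horizontal timelike curve; it is obtained by solving the ODE in local
  coordinates of \<open>M\<close> by Picard iteration.
\<close>

section \<open>Absolute continuity\<close>

definition disjoint_subintervals :: "real \<Rightarrow> real \<Rightarrow> nat \<Rightarrow> (nat \<Rightarrow> real) \<Rightarrow> (nat \<Rightarrow> real) \<Rightarrow> bool" where
  "disjoint_subintervals a b n s t \<longleftrightarrow>
     (\<forall>i<n. a \<le> s i \<and> s i \<le> t i \<and> t i \<le> b) \<and> (\<forall>i<n. \<forall>j<n. i \<noteq> j \<longrightarrow> t i \<le> s j \<or> t j \<le> s i)"

lemma abs_continuous_on_iff:
  "abs_continuous_on a b \<gamma> \<longleftrightarrow> (\<forall>e>0. \<exists>\<delta>>0. \<forall>n s t. disjoint_subintervals a b n s t \<longrightarrow>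
     (\<Sum>i<n. t i - s i) < \<delta> \<longrightarrow> (\<Sum>i<n. dist (\<gamma> (s i)) (\<gamma> (t i))) < e)"
  unfolding abs_continuous_on_def disjoint_subintervals_def conj_assoc imp_conjL ..

lemma disjoint_subintervals_mono:
  "disjoint_subintervals c d n s t \<Longrightarrow> a \<le> c \<Longrightarrow> d \<le> b \<Longrightarrow> disjoint_subintervals a b n s t"
  unfolding disjoint_subintervals_def by force

lemma disjoint_subintervals_shift:
  "disjoint_subintervals (a + e) (b + e) n s t \<Longrightarrow> disjoint_subintervals a b n (\<lambda>i. s i - e) (\<lambda>i. t i - e)"
  unfolding disjoint_subintervals_def by force

lemma disjoint_subintervals_split:
  assumes "disjoint_subintervals a d n s t" "a \<le> b" "b \<le> d"
  shows "disjoint_subintervals a b n (\<lambda>i. min (s i) b) (\<lambda>i. min (t i) b)"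
    and "disjoint_subintervals b d n (\<lambda>i. max (s i) b) (\<lambda>i. max (t i) b)"
proof -
  have bounds: "a \<le> s i \<and> s i \<le> t i \<and> t i \<le> d" if "i < n" for i
    using assms(1) that unfolding disjoint_subintervals_def by blast
  have disjoint: "t i \<le> s j \<or> t j \<le> s i" if "i < n" "j < n" "i \<noteq> j" for i j
    using assms(1) that unfolding disjoint_subintervals_def by blast
  show "disjoint_subintervals a b n (\<lambda>i. min (s i) b) (\<lambda>i. min (t i) b)"
    unfolding disjoint_subintervals_def
    using bounds disjoint assms(2) by (meson min.mono min.cobounded2 min.boundedI order_refl)
  show "disjoint_subintervals b d n (\<lambda>i. max (s i) b) (\<lambda>i. max (t i) b)"
    unfolding disjoint_subintervals_def
    using bounds disjoint assms(3) by (meson max.mono max.cobounded2 max.boundedI order_refl)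
qed

lemma abs_continuous_on_subinterval:
  assumes "abs_continuous_on a b \<gamma>" "a \<le> c" "d \<le> b"
  shows "abs_continuous_on c d \<gamma>"
  unfolding abs_continuous_on_iff
proof (intro allI impI)
  fix e :: real assume "e > 0"
  with assms(1) obtain \<delta> where "\<delta> > 0" and \<delta>: "\<And>n s t. disjoint_subintervals a b n s t \<Longrightarrow>
      (\<Sum>i<n. t i - s i) < \<delta> \<Longrightarrow> (\<Sum>i<n. dist (\<gamma> (s i)) (\<gamma> (t i))) < e"
    unfolding abs_continuous_on_iff by meson
  show "\<exists>\<delta>>0. \<forall>n s t. disjoint_subintervals c d n s t \<longrightarrow> (\<Sum>i<n. t i - s i) < \<delta> \<longrightarrow>
      (\<Sum>i<n. dist (\<gamma> (s i)) (\<gamma> (t i))) < e"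
    using \<open>\<delta> > 0\<close> \<delta>[OF disjoint_subintervals_mono[OF _ assms(2,3)]] by blast
qed

lemma abs_continuous_on_shift:
  assumes "abs_continuous_on a b \<gamma>"
  shows "abs_continuous_on (a + e) (b + e) (\<lambda>t. \<gamma> (t - e))"
  unfolding abs_continuous_on_iff
proof (intro allI impI)
  fix \<epsilon> :: real assume "\<epsilon> > 0"
  with assms obtain \<delta> where "\<delta> > 0" and \<delta>: "\<And>n s t. disjoint_subintervals a b n s t \<Longrightarrow>
      (\<Sum>i<n. t i - s i) < \<delta> \<Longrightarrow> (\<Sum>i<n. dist (\<gamma> (s i)) (\<gamma> (t i))) < \<epsilon>"
    unfolding abs_continuous_on_iff by meson
  show "\<exists>\<delta>>0. \<forall>n s t. disjoint_subintervals (a + e) (b + e) n s t \<longrightarrow> (\<Sum>i<n. t i - s i) < \<delta> \<longrightarrow>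
      (\<Sum>i<n. dist (\<gamma> (s i - e)) (\<gamma> (t i - e))) < \<epsilon>"
    using \<open>\<delta> > 0\<close> \<delta>[OF disjoint_subintervals_shift] by auto
qed

lemma abs_continuous_on_concat:
  assumes ac1: "abs_continuous_on a b \<gamma>1" and ac2: "abs_continuous_on b d \<gamma>2"
    and "a \<le> b" "b \<le> d" and join: "\<gamma>1 b = \<gamma>2 b"
  shows "abs_continuous_on a d (\<lambda>t. if t \<le> b then \<gamma>1 t else \<gamma>2 t)" (is "abs_continuous_on a d ?\<gamma>")
  unfolding abs_continuous_on_iff
proof (intro allI impI)
  fix e :: real assume "e > 0"
  then have "e/2 > 0" by simp
  obtain \<delta>1 where "\<delta>1 > 0"
    and \<delta>1: "\<And>n s t. disjoint_subintervals a b n s t \<Longrightarrow>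
      (\<Sum>i<n. t i - s i) < \<delta>1 \<Longrightarrow> (\<Sum>i<n. dist (\<gamma>1 (s i)) (\<gamma>1 (t i))) < e/2"
    using ac1 \<open>e/2 > 0\<close> unfolding abs_continuous_on_iff by meson
  obtain \<delta>2 where "\<delta>2 > 0"
    and \<delta>2: "\<And>n s t. disjoint_subintervals b d n s t \<Longrightarrow>
      (\<Sum>i<n. t i - s i) < \<delta>2 \<Longrightarrow> (\<Sum>i<n. dist (\<gamma>2 (s i)) (\<gamma>2 (t i))) < e/2"
    using ac2 \<open>e/2 > 0\<close> unfolding abs_continuous_on_iff by meson
  have "(\<Sum>i<n. dist (?\<gamma> (s i)) (?\<gamma> (t i))) < e"
    if st: "disjoint_subintervals a d n s t" "(\<Sum>i<n. t i - s i) < min \<delta>1 \<delta>2" for n s t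
  proof -
    define s1 where "s1 = (\<lambda>i. min (s i) b)"
    define t1 where "t1 = (\<lambda>i. min (t i) b)"
    define s2 where "s2 = (\<lambda>i. max (s i) b)"
    define t2 where "t2 = (\<lambda>i. max (t i) b)"
    note split_defs = s1_def t1_def s2_def t2_def
    have le: "s i \<le> t i" if "i < n" for i
      using st(1) that by (auto simp: disjoint_subintervals_def)
    have "t1 i - s1 i \<le> t i - s i" "t2 i - s2 i \<le> t i - s i" if "i < n" for i
      using le[OF that] by (auto simp: split_defs min_def max_def)
    then have "(\<Sum>i<n. t1 i - s1 i) \<le> (\<Sum>i<n. t i - s i)" "(\<Sum>i<n. t2 i - s2 i) \<le> (\<Sum>i<n. t i - s i)"
      by (auto intro!: sum_mono)
    moreover have "disjoint_subintervals a b n s1 t1" "disjoint_subintervals b d n s2 t2"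
      unfolding split_defs using disjoint_subintervals_split[OF st(1) assms(3,4)] by auto
    ultimately have "(\<Sum>i<n. dist (\<gamma>1 (s1 i)) (\<gamma>1 (t1 i))) < e/2" "(\<Sum>i<n. dist (\<gamma>2 (s2 i)) (\<gamma>2 (t2 i))) < e/2"
      using \<delta>1 \<delta>2 st(2) by simp_all
    moreover have "dist (?\<gamma> (s i)) (?\<gamma> (t i)) \<le> dist (\<gamma>1 (s1 i)) (\<gamma>1 (t1 i)) + dist (\<gamma>2 (s2 i)) (\<gamma>2 (t2 i))"
      if "i < n" for i
      using le[OF that] dist_triangle[of "\<gamma>1 (s i)" "\<gamma>2 (t i)" "\<gamma>1 b"] join
      by (auto simp: split_defs)
    then have "(\<Sum>i<n. dist (?\<gamma> (s i)) (?\<gamma> (t i))) \<le>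
        (\<Sum>i<n. dist (\<gamma>1 (s1 i)) (\<gamma>1 (t1 i))) + (\<Sum>i<n. dist (\<gamma>2 (s2 i)) (\<gamma>2 (t2 i)))"
      unfolding sum.distrib[symmetric] by (rule sum_mono) simp
    ultimately show ?thesis by linarith
  qed
  then show "\<exists>\<delta>>0. \<forall>n s t. disjoint_subintervals a d n s t \<longrightarrow> (\<Sum>i<n. t i - s i) < \<delta> \<longrightarrow>
      (\<Sum>i<n. dist (?\<gamma> (s i)) (?\<gamma> (t i))) < e"
    using \<open>\<delta>1 > 0\<close> \<open>\<delta>2 > 0\<close> by (intro exI[of _ "min \<delta>1 \<delta>2"]) auto
qed

lemma abs_continuous_on_imp_continuous_on:
  assumes "abs_continuous_on a b \<gamma>"
  shows "continuous_on {a..b} \<gamma>"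
  unfolding continuous_on_iff
proof (intro ballI allI impI)
  fix x e assume x: "x \<in> {a..b}" and "(e::real) > 0"
  with assms obtain \<delta> where "\<delta> > 0" and \<delta>: "\<And>n s t. disjoint_subintervals a b n s t \<Longrightarrow>
      (\<Sum>i<n. t i - s i) < \<delta> \<Longrightarrow> (\<Sum>i<n. dist (\<gamma> (s i)) (\<gamma> (t i))) < e"
    unfolding abs_continuous_on_iff by meson
  have single: "dist (\<gamma> u) (\<gamma> v) < e" if "a \<le> u" "u \<le> v" "v \<le> b" "v - u < \<delta>" for u v
    using \<delta>[of 1 "\<lambda>_. u" "\<lambda>_. v"] that by (simp add: disjoint_subintervals_def)
  have "dist (\<gamma> y) (\<gamma> x) < e" if "y \<in> {a..b}" "dist y x < \<delta>" for y
    using single[of x y] single[of y x] x that by (cases "x \<le> y") (auto simp: dist_real_def dist_commute)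
  then show "\<exists>d>0. \<forall>y\<in>{a..b}. dist y x < d \<longrightarrow> dist (\<gamma> y) (\<gamma> x) < e"
    using \<open>\<delta> > 0\<close> by blast
qed

lemma lipschitz_on_imp_abs_continuous_on:
  assumes "B-lipschitz_on {a..b} \<gamma>"
  shows "abs_continuous_on a b \<gamma>"
  unfolding abs_continuous_on_iff
proof (intro allI impI)
  fix e :: real assume "e > 0"
  have B: "B \<ge> 0" using lipschitz_on_nonneg[OF assms] .
  have "(\<Sum>i<n. dist (\<gamma> (s i)) (\<gamma> (t i))) < e"
    if st: "disjoint_subintervals a b n s t" "(\<Sum>i<n. t i - s i) < e / (B + 1)" for n s t
  proof -
    have "dist (\<gamma> (s i)) (\<gamma> (t i)) \<le> B * (t i - s i)" if "i < n" for i
    proof -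
      have "s i \<in> {a..b}" "t i \<in> {a..b}" "s i \<le> t i"
        using st(1) that by (auto simp: disjoint_subintervals_def)
      then show ?thesis using lipschitz_onD[OF assms, of "s i" "t i"] by (simp add: dist_real_def)
    qed
    then have "(\<Sum>i<n. dist (\<gamma> (s i)) (\<gamma> (t i))) \<le> (\<Sum>i<n. B * (t i - s i))"
      by (intro sum_mono) simp
    also have "\<dots> = B * (\<Sum>i<n. t i - s i)"
      by (rule sum_distrib_left[symmetric])
    also have "\<dots> \<le> B * (e / (B + 1))"
      using st(2) B by (intro mult_left_mono) auto
    also have "\<dots> < e" using B \<open>e > 0\<close> by (simp add: field_simps)
    finally show ?thesis .
  qed
  then show "\<exists>\<delta>>0. \<forall>n s t. disjoint_subintervals a b n s t \<longrightarrow> (\<Sum>i<n. t i - s i) < \<delta> \<longrightarrow>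
      (\<Sum>i<n. dist (\<gamma> (s i)) (\<gamma> (t i))) < e"
    using \<open>e > 0\<close> B by (intro exI[of _ "e / (B + 1)"]) auto
qed

section \<open>Timelike future-directed curves\<close>

lemma AE_lborel_translate:
  assumes "AE t in lborel. P (t::real)"
  shows "AE t in lborel. P (t - e)"
proof -
  obtain N where N: "N \<in> null_sets lborel" "{x \<in> space lborel. \<not> P x} \<subseteq> N"
    using assms unfolding eventually_ae_filter by blast
  then have "{x. x - e \<in> N} \<in> null_sets lborel" "{x \<in> space lborel. \<not> P (x - e)} \<subseteq> {x. x - e \<in> N}"
    using null_sets_translation[OF N(1)] by auto
  then show ?thesis unfolding eventually_ae_filter by blast
qed

lemma set_integrable_Icc_translate:
  fixes f :: "real \<Rightarrow> real"
  assumes "set_integrable lborel {a..b} f"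
  shows "set_integrable lborel {a + e..b + e} (\<lambda>t. f (t - e))"
proof -
  have "integrable lborel (\<lambda>x. indicator {a..b} (-e + 1 * x) *\<^sub>R f (-e + 1 * x))"
    using lborel_integrable_real_affine[of _ 1 "-e"] assms unfolding set_integrable_def by simp
  moreover have "(\<lambda>x. indicator {a..b} (-e + 1 * x) *\<^sub>R f (-e + 1 * x)) =
      (\<lambda>x. indicator {a + e..b + e} x *\<^sub>R f (x - e))"
    by (auto simp: indicator_def fun_eq_iff)
  ultimately show ?thesis unfolding set_integrable_def by simp
qed

lemma set_integrable_Icc_concat:
  fixes f1 f2 :: "real \<Rightarrow> real"
  assumes "set_integrable lborel {a..b} f1" "set_integrable lborel {b..d} f2" "a \<le> b" "b \<le> d"
  shows "set_integrable lborel {a..d} (\<lambda>t. if t \<le> b then f1 t else f2 t)"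
proof -
  have "set_integrable lborel {a..b} (\<lambda>t. if t \<le> b then f1 t else f2 t)"
    by (rule set_integrable_cong[THEN iffD1, OF refl refl _ assms(1)]) simp
  moreover have "set_integrable lborel {b<..d} (\<lambda>t. if t \<le> b then f1 t else f2 t)"
    by (rule set_integrable_cong[THEN iffD1, OF refl refl _ set_integrable_subset[OF assms(2)]]) auto
  ultimately have "set_integrable lborel ({a..b} \<union> {b<..d}) (\<lambda>t. if t \<le> b then f1 t else f2 t)"
    by (rule set_integrable_Un) auto
  moreover have "{a..b} \<union> {b<..d} = {a..d}" using assms(3,4) by auto
  ultimately show ?thesis by (simp only:)
qed

lemma continuous_on_Icc_enters_open:
  fixes \<gamma> :: "real \<Rightarrow> 'a::topological_space"
  assumes "continuous_on {a..b} \<gamma>" "a < b" "open G" "\<gamma> a \<in> G \<or> \<gamma> b \<in> G"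
  obtains t where "t \<in> {a<..<b}" "\<gamma> t \<in> G"
proof -
  obtain A where A: "open A" "A \<inter> {a..b} = \<gamma> -` G \<inter> {a..b}"
    using assms(1,3) unfolding continuous_on_open_invariant by meson
  have in_A: "c \<in> A" if "c \<in> {a..b}" "\<gamma> c \<in> G" for c
  proof -
    have "c \<in> \<gamma> -` G \<inter> {a..b}" using that by simp
    then show ?thesis unfolding A(2)[symmetric] by simp
  qed
  obtain c where "c \<in> A" "c islimpt {a<..<b}"
    using assms(2,4) in_A islimpt_greaterThanLessThan1 islimpt_greaterThanLessThan2
    by (metis atLeastAtMost_iff less_imp_le order_refl)
  then obtain t where t: "t \<in> {a<..<b}" "t \<in> A"
    using A(1) by (meson islimptE)
  then have "t \<in> A \<inter> {a..b}" by auto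
  then show ?thesis using that t unfolding A(2) by auto
qed

definition tfd_velocity :: "('e::euclidean_space \<Rightarrow> 'e set) \<Rightarrow> ('e \<Rightarrow> 'e \<Rightarrow> 'e \<Rightarrow> real) \<Rightarrow> ('e \<Rightarrow> 'e) \<Rightarrow>
    (real \<Rightarrow> 'e) \<Rightarrow> 'e \<Rightarrow> real \<Rightarrow> bool" where
  "tfd_velocity D g T \<gamma> v t \<longleftrightarrow> (\<gamma> has_vector_derivative v) (at t) \<and> v \<in> D (\<gamma> t) \<and>
     g (\<gamma> t) v v < 0 \<and> g (\<gamma> t) (T (\<gamma> t)) v < 0"

lemma tfd_curveI:
  assumes "\<gamma> ` {a..b} \<subseteq> M" "abs_continuous_on a b \<gamma>"
    and "set_integrable lborel {a..b} (\<lambda>t. (norm (\<gamma>' t))\<^sup>2)"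
    and "AE t in lborel. t \<in> {a..b} \<longrightarrow> tfd_velocity D g T \<gamma> (\<gamma>' t) t"
  shows "tfd_curve M D g T a b \<gamma>"
  unfolding tfd_curve_def using assms(4) unfolding tfd_velocity_def
  by (intro conjI exI[of _ \<gamma>'] assms(1-3))

lemma tfd_curveE:
  assumes "tfd_curve M D g T a b \<gamma>"
  obtains \<gamma>' where "\<gamma> ` {a..b} \<subseteq> M" "abs_continuous_on a b \<gamma>"
    "set_integrable lborel {a..b} (\<lambda>t. (norm (\<gamma>' t))\<^sup>2)"
    "AE t in lborel. t \<in> {a..b} \<longrightarrow> tfd_velocity D g T \<gamma> (\<gamma>' t) t"
  using assms unfolding tfd_curve_def tfd_velocity_def by blast

lemma tfd_velocity_transform_within_open:
  assumes "tfd_velocity D g T \<gamma> v t" "open S" "t \<in> S" "\<And>s. s \<in> S \<Longrightarrow> \<eta> s = \<gamma> s"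
  shows "tfd_velocity D g T \<eta> v t"
  using assms has_vector_derivative_transform_within_open[of \<gamma> v t S \<eta>]
  unfolding tfd_velocity_def by auto

lemma tfd_curve_subinterval:
  assumes "tfd_curve M D g T a b \<gamma>" "a \<le> c" "d \<le> b"
  shows "tfd_curve M D g T c d \<gamma>"
proof -
  obtain \<gamma>' where \<gamma>: "\<gamma> ` {a..b} \<subseteq> M" "abs_continuous_on a b \<gamma>"
    "set_integrable lborel {a..b} (\<lambda>t. (norm (\<gamma>' t))\<^sup>2)"
    "AE t in lborel. t \<in> {a..b} \<longrightarrow> tfd_velocity D g T \<gamma> (\<gamma>' t) t"
    using assms(1) by (rule tfd_curveE)
  have sub: "{c..d} \<subseteq> {a..b}" using assms(2,3) by auto
  show ?thesis
  proof (rule tfd_curveI[where \<gamma>' = \<gamma>'])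
    show "\<gamma> ` {c..d} \<subseteq> M" using \<gamma>(1) sub by blast
    show "abs_continuous_on c d \<gamma>" using \<gamma>(2) assms(2,3) by (rule abs_continuous_on_subinterval)
    show "set_integrable lborel {c..d} (\<lambda>t. (norm (\<gamma>' t))\<^sup>2)"
      using sub by (intro set_integrable_subset[OF \<gamma>(3)]) auto
    show "AE t in lborel. t \<in> {c..d} \<longrightarrow> tfd_velocity D g T \<gamma> (\<gamma>' t) t"
      using \<gamma>(4) by (rule AE_mp) (use sub in auto)
  qed
qed

lemma tfd_curve_shift:
  assumes "tfd_curve M D g T a b \<gamma>"
  shows "tfd_curve M D g T (a + e) (b + e) (\<lambda>t. \<gamma> (t - e))"
proof -
  obtain \<gamma>' where \<gamma>: "\<gamma> ` {a..b} \<subseteq> M" "abs_continuous_on a b \<gamma>"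
    "set_integrable lborel {a..b} (\<lambda>t. (norm (\<gamma>' t))\<^sup>2)"
    "AE t in lborel. t \<in> {a..b} \<longrightarrow> tfd_velocity D g T \<gamma> (\<gamma>' t) t"
    using assms by (rule tfd_curveE)
  have shifted: "tfd_velocity D g T (\<lambda>t. \<gamma> (t - e)) v t" if "tfd_velocity D g T \<gamma> v (t - e)" for v t
  proof -
    have "((\<lambda>t. t - e) has_vector_derivative 1) (at t)"
      by (auto intro!: derivative_eq_intros simp: has_vector_derivative_def)
    from vector_diff_chain_at[OF this, of \<gamma> v] that show ?thesis
      unfolding tfd_velocity_def by (simp add: o_def)
  qed
  show ?thesis
  proof (rule tfd_curveI[where \<gamma>' = "\<lambda>t. \<gamma>' (t - e)"])
    show "(\<lambda>t. \<gamma> (t - e)) ` {a + e..b + e} \<subseteq> M"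
      using \<gamma>(1) by (auto simp: image_subset_iff)
    show "abs_continuous_on (a + e) (b + e) (\<lambda>t. \<gamma> (t - e))"
      using \<gamma>(2) by (rule abs_continuous_on_shift)
    show "set_integrable lborel {a + e..b + e} (\<lambda>t. (norm (\<gamma>' (t - e)))\<^sup>2)"
      using \<gamma>(3) by (rule set_integrable_Icc_translate)
    show "AE t in lborel. t \<in> {a + e..b + e} \<longrightarrow> tfd_velocity D g T (\<lambda>t. \<gamma> (t - e)) (\<gamma>' (t - e)) t"
      using AE_lborel_translate[OF \<gamma>(4), of e] by (rule AE_mp) (auto intro: shifted)
  qed
qed

lemma AE_tfd_velocity_concat:
  assumes "AE t in lborel. t \<in> {a..b} \<longrightarrow> tfd_velocity D g T \<gamma>1 (\<gamma>1' t) t"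
    and "AE t in lborel. t \<in> {b..d} \<longrightarrow> tfd_velocity D g T \<gamma>2 (\<gamma>2' t) t"
  shows "AE t in lborel. t \<in> {a..d} \<longrightarrow>
    tfd_velocity D g T (\<lambda>t. if t \<le> b then \<gamma>1 t else \<gamma>2 t) (if t \<le> b then \<gamma>1' t else \<gamma>2' t) t"
  using assms AE_lborel_singleton[of b]
proof eventually_elim
  case (elim t)
  show ?case
  proof
    assume t: "t \<in> {a..d}"
    show "tfd_velocity D g T (\<lambda>t. if t \<le> b then \<gamma>1 t else \<gamma>2 t) (if t \<le> b then \<gamma>1' t else \<gamma>2' t) t"
    proof (cases "t < b")
      case True
      with elim(1) t have "tfd_velocity D g T \<gamma>1 (if t \<le> b then \<gamma>1' t else \<gamma>2' t) t" by simp
      then show ?thesis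
        by (rule tfd_velocity_transform_within_open[where S = "{..<b}"]) (use True in auto)
    next
      case False
      with elim(3) have "b < t" by simp
      with elim(2) t have "tfd_velocity D g T \<gamma>2 (if t \<le> b then \<gamma>1' t else \<gamma>2' t) t" by simp
      then show ?thesis
        by (rule tfd_velocity_transform_within_open[where S = "{b<..}"]) (use \<open>b < t\<close> in auto)
    qed
  qed
qed

lemma tfd_curve_concat:
  assumes c1: "tfd_curve M D g T a b \<gamma>1" and c2: "tfd_curve M D g T b d \<gamma>2"
    and "a \<le> b" "b \<le> d" and join: "\<gamma>1 b = \<gamma>2 b"
  shows "tfd_curve M D g T a d (\<lambda>t. if t \<le> b then \<gamma>1 t else \<gamma>2 t)"
proof -
  obtain \<gamma>1' where 1: "\<gamma>1 ` {a..b} \<subseteq> M" "abs_continuous_on a b \<gamma>1"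
    "set_integrable lborel {a..b} (\<lambda>t. (norm (\<gamma>1' t))\<^sup>2)"
    "AE t in lborel. t \<in> {a..b} \<longrightarrow> tfd_velocity D g T \<gamma>1 (\<gamma>1' t) t"
    using c1 by (rule tfd_curveE)
  obtain \<gamma>2' where 2: "\<gamma>2 ` {b..d} \<subseteq> M" "abs_continuous_on b d \<gamma>2"
    "set_integrable lborel {b..d} (\<lambda>t. (norm (\<gamma>2' t))\<^sup>2)"
    "AE t in lborel. t \<in> {b..d} \<longrightarrow> tfd_velocity D g T \<gamma>2 (\<gamma>2' t) t"
    using c2 by (rule tfd_curveE)
  show ?thesis
  proof (rule tfd_curveI[where \<gamma>' = "\<lambda>t. if t \<le> b then \<gamma>1' t else \<gamma>2' t"])
    show "(\<lambda>t. if t \<le> b then \<gamma>1 t else \<gamma>2 t) ` {a..d} \<subseteq> M"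
      using 1(1) 2(1) by (auto simp: image_subset_iff)
    show "abs_continuous_on a d (\<lambda>t. if t \<le> b then \<gamma>1 t else \<gamma>2 t)"
      using 1(2) 2(2) assms(3,4) join by (rule abs_continuous_on_concat)
    have "(\<lambda>t. (norm (if t \<le> b then \<gamma>1' t else \<gamma>2' t))\<^sup>2) =
        (\<lambda>t. if t \<le> b then (norm (\<gamma>1' t))\<^sup>2 else (norm (\<gamma>2' t))\<^sup>2)"
      by (simp add: fun_eq_iff)
    with set_integrable_Icc_concat[OF 1(3) 2(3) assms(3,4)]
    show "set_integrable lborel {a..d} (\<lambda>t. (norm (if t \<le> b then \<gamma>1' t else \<gamma>2' t))\<^sup>2)"
      by (simp only:)
    show "AE t in lborel. t \<in> {a..d} \<longrightarrow>
        tfd_velocity D g T (\<lambda>t. if t \<le> b then \<gamma>1 t else \<gamma>2 t) (if t \<le> b then \<gamma>1' t else \<gamma>2' t) t"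
      using 1(4) 2(4) by (rule AE_tfd_velocity_concat)
  qed
qed

lemma tfd_curveI_C1:
  fixes \<gamma> :: "real \<Rightarrow> 'e::euclidean_space"
  assumes "a < b" "\<gamma> ` {a..b} \<subseteq> M" "continuous_on {a..b} \<gamma>'"
    and der: "\<And>t. t \<in> {a..b} \<Longrightarrow> (\<gamma> has_vector_derivative \<gamma>' t) (at t within {a..b})"
    and timelike: "\<And>t. t \<in> {a<..<b} \<Longrightarrow>
      \<gamma>' t \<in> D (\<gamma> t) \<and> g (\<gamma> t) (\<gamma>' t) (\<gamma>' t) < 0 \<and> g (\<gamma> t) (T (\<gamma> t)) (\<gamma>' t) < 0"
  shows "tfd_curve M D g T a b \<gamma>"
proof -
  obtain B where "B > 0" "\<forall>t\<in>{a..b}. norm (\<gamma>' t) \<le> B"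
    using compact_imp_bounded[OF compact_continuous_image[OF assms(3) compact_Icc]]
    unfolding bounded_pos by blast
  then have "B-lipschitz_on {a..b} \<gamma>"
    using der unfolding has_vector_derivative_def
    by (intro bounded_derivative_imp_lipschitz) (auto simp: onorm_scaleR_left onorm_id)
  show ?thesis
  proof (rule tfd_curveI[where \<gamma>' = \<gamma>'])
    show "\<gamma> ` {a..b} \<subseteq> M" by (fact assms(2))
    show "abs_continuous_on a b \<gamma>"
      using \<open>B-lipschitz_on {a..b} \<gamma>\<close> by (rule lipschitz_on_imp_abs_continuous_on)
    show "set_integrable lborel {a..b} (\<lambda>t. (norm (\<gamma>' t))\<^sup>2)"
      by (intro borel_integrable_atLeastAtMost' continuous_intros assms(3))
    show "AE t in lborel. t \<in> {a..b} \<longrightarrow> tfd_velocity D g T \<gamma> (\<gamma>' t) t"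
      using AE_lborel_singleton[of a] AE_lborel_singleton[of b]
    proof eventually_elim
      case (elim t)
      show ?case
      proof
        assume "t \<in> {a..b}"
        with elim have t: "t \<in> {a<..<b}" by auto
        then have "(\<gamma> has_vector_derivative \<gamma>' t) (at t)"
          using der[of t] by (simp add: at_within_Icc_at)
        with timelike[OF t] show "tfd_velocity D g T \<gamma> (\<gamma>' t) t"
          unfolding tfd_velocity_def by blast
      qed
    qed
  qed
qed

lemma chron_imp_mem:
  "chron M D g T p q \<Longrightarrow> p \<in> M \<and> q \<in> M"
  unfolding chron_def tfd_curve_def by force

lemma chron_trans:
  assumes "chron M D g T p q" "chron M D g T q r"
  shows "chron M D g T p r"
proof -
  obtain a b \<gamma>1 where 1: "a < b" "tfd_curve M D g T a b \<gamma>1" "\<gamma>1 a = p" "\<gamma>1 b = q"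
    using assms(1) unfolding chron_def by blast
  obtain c d \<gamma>2 where 2: "c < d" "tfd_curve M D g T c d \<gamma>2" "\<gamma>2 c = q" "\<gamma>2 d = r"
    using assms(2) unfolding chron_def by blast
  define \<gamma> where "\<gamma> = (\<lambda>t. if t \<le> b then \<gamma>1 t else \<gamma>2 (t - (b - c)))"
  have "tfd_curve M D g T b (d + (b - c)) (\<lambda>t. \<gamma>2 (t - (b - c)))"
    using tfd_curve_shift[OF 2(2), of "b - c"] by simp
  then have "tfd_curve M D g T a (d + (b - c)) \<gamma>"
    unfolding \<gamma>_def using 1 2 by (intro tfd_curve_concat[OF 1(2)]) auto
  moreover have "a < d + (b - c)" "\<gamma> a = p" "\<gamma> (d + (b - c)) = r"
    using 1(1,3) 2(1,4) by (simp_all add: \<gamma>_def)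
  ultimately show ?thesis
    unfolding chron_def by (intro exI[of _ a] exI[of _ "d + (b - c)"] exI[of _ \<gamma>]) simp
qed

lemma chron_through_open:
  assumes "chron M D g T p q" "open G" "p \<in> G \<or> q \<in> G"
  obtains r where "r \<in> M \<inter> G" "chron M D g T p r" "chron M D g T r q"
proof -
  obtain a b \<gamma> where c: "a < b" "tfd_curve M D g T a b \<gamma>" "\<gamma> a = p" "\<gamma> b = q"
    using assms(1) unfolding chron_def by blast
  moreover have "continuous_on {a..b} \<gamma>"
    using c(2) abs_continuous_on_imp_continuous_on unfolding tfd_curve_def by blast
  ultimately obtain t where t: "t \<in> {a<..<b}" "\<gamma> t \<in> G"
    using continuous_on_Icc_enters_open assms(2,3) by metis
  have "tfd_curve M D g T a t \<gamma>" "tfd_curve M D g T t b \<gamma>"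
    using t tfd_curve_subinterval[OF c(2)] by auto
  then have "chron M D g T p (\<gamma> t)" "chron M D g T (\<gamma> t) q"
    unfolding chron_def using t c by auto
  moreover have "\<gamma> t \<in> M" using c(2) t unfolding tfd_curve_def by auto
  ultimately show ?thesis using that t by blast
qed

section \<open>Local solutions of Lipschitz ODEs\<close>

text \<open>Clamping the time to \<open>[0, \<delta>]\<close> lets the Picard operator act on bounded continuous functions on \<open>\<real>\<close>.\<close>

definition picard_step :: "('a::euclidean_space \<Rightarrow> 'a) \<Rightarrow> 'a \<Rightarrow> real \<Rightarrow> (real \<Rightarrow> 'a) \<Rightarrow> real \<Rightarrow> 'a" where
  "picard_step G y0 \<delta> u t = y0 + integral {0..max 0 (min \<delta> t)} (\<lambda>s. G (u s))"

lemma picard_step_bcontfun: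
  assumes G: "continuous_on UNIV G" and bnd: "\<And>x. norm (G x) \<le> B"
    and "\<delta> \<ge> 0" and u: "continuous_on UNIV u"
  shows "picard_step G y0 \<delta> u \<in> bcontfun"
proof (rule bcontfun_normI)
  have clamp: "max 0 (min \<delta> t) \<in> {0..\<delta>}" for t using \<open>\<delta> \<ge> 0\<close> by auto
  have Gu: "continuous_on {0..\<delta>} (\<lambda>s. G (u s))"
    by (rule continuous_on_compose2[OF G continuous_on_subset[OF u]]) auto
  have "continuous_on {0..\<delta>} (\<lambda>x. integral {0..x} (\<lambda>s. G (u s)))"
    by (rule indefinite_integral_continuous_1) (rule integrable_continuous_real[OF Gu])
  then have "continuous_on UNIV (\<lambda>t. integral {0..max 0 (min \<delta> t)} (\<lambda>s. G (u s)))"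
    by (rule continuous_on_compose2[of _ _ _ "\<lambda>t. max 0 (min \<delta> t)"])
       (use \<open>\<delta> \<ge> 0\<close> in \<open>auto intro!: continuous_intros simp: image_subset_iff\<close>)
  then show "continuous_on UNIV (picard_step G y0 \<delta> u)"
    unfolding picard_step_def by (intro continuous_intros)
  fix t
  have "{0..max 0 (min \<delta> t)} \<subseteq> {0..\<delta>}" using clamp[of t] by auto
  then have "norm (integral {0..max 0 (min \<delta> t)} (\<lambda>s. G (u s))) \<le> B * (max 0 (min \<delta> t) - 0)"
    by (intro integral_bound continuous_on_subset[OF Gu]) (use clamp[of t] bnd in auto)
  also have "\<dots> \<le> \<bar>B\<bar> * \<delta>" using clamp[of t] by (intro mult_mono) auto
  finally show "norm (picard_step G y0 \<delta> u t) \<le> norm y0 + \<bar>B\<bar> * \<delta>"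
    unfolding picard_step_def by (meson add_left_mono norm_triangle_ineq order_trans)
qed

lemma picard_step_dist:
  fixes f g :: "real \<Rightarrow>\<^sub>C 'a::euclidean_space"
  assumes lip: "L-lipschitz_on UNIV G" and "\<delta> \<ge> 0"
  shows "dist (picard_step G y0 \<delta> f t) (picard_step G y0 \<delta> g t) \<le> (L * \<delta>) * dist f g"
proof -
  have L: "L \<ge> 0" using lipschitz_on_nonneg[OF lip] .
  have G: "continuous_on UNIV G" using lipschitz_on_continuous_on[OF lip] .
  define c where "c = max 0 (min \<delta> t)"
  have c: "0 \<le> c" "c \<le> \<delta>" using \<open>\<delta> \<ge> 0\<close> by (auto simp: c_def)
  have integrable: "(\<lambda>s. G (apply_bcontfun h s)) integrable_on {0..c}" for h
    by (intro integrable_continuous_real continuous_on_compose2[OF G]) auto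
  have "dist (picard_step G y0 \<delta> f t) (picard_step G y0 \<delta> g t) = norm (integral {0..c} (\<lambda>s. G (f s) - G (g s)))"
    unfolding picard_step_def c_def[symmetric] dist_norm by (simp add: integral_diff[OF integrable integrable])
  also have "\<dots> \<le> (L * dist f g) * (c - 0)"
  proof (rule integral_bound)
    show "continuous_on {0..c} (\<lambda>s. G (f s) - G (g s))"
      by (intro continuous_intros continuous_on_compose2[OF G]) auto
    fix s
    have "norm (G (f s) - G (g s)) \<le> L * dist (f s) (g s)"
      using lipschitz_onD[OF lip] by (simp add: dist_norm)
    also have "\<dots> \<le> L * dist f g" using dist_bounded L by (rule mult_left_mono)
    finally show "norm (G (f s) - G (g s)) \<le> L * dist f g" .
  qed (use c in auto)
  also have "\<dots> \<le> (L * dist f g) * \<delta>" using c L by (intro mult_left_mono) auto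
  finally show ?thesis by (simp add: ac_simps)
qed

lemma picard_integral_equation:
  fixes G :: "'a::euclidean_space \<Rightarrow> 'a"
  assumes lip: "L-lipschitz_on UNIV G" and bnd: "\<And>x. norm (G x) \<le> B"
    and "\<delta> \<ge> 0" and small: "L * \<delta> \<le> 1/2"
  obtains y where "continuous_on UNIV y" "\<And>t. t \<in> {0..\<delta>} \<Longrightarrow> y t = y0 + integral {0..t} (\<lambda>s. G (y s))"
proof -
  have G: "continuous_on UNIV G" using lipschitz_on_continuous_on[OF lip] .
  define \<Phi> :: "(real \<Rightarrow>\<^sub>C 'a) \<Rightarrow> (real \<Rightarrow>\<^sub>C 'a)" where "\<Phi> f = Bcontfun (picard_step G y0 \<delta> f)" for f
  have \<Phi>_apply: "apply_bcontfun (\<Phi> f) = picard_step G y0 \<delta> f" for f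
    unfolding \<Phi>_def by (rule Bcontfun_inverse[OF picard_step_bcontfun[OF G bnd \<open>\<delta> \<ge> 0\<close>]]) simp
  have "\<forall>f g. dist (\<Phi> f) (\<Phi> g) \<le> 1/2 * dist f g"
  proof (intro allI dist_bound)
    fix f g t
    have "dist (\<Phi> f t) (\<Phi> g t) \<le> (L * \<delta>) * dist f g"
      unfolding \<Phi>_apply by (rule picard_step_dist[OF lip \<open>\<delta> \<ge> 0\<close>])
    also have "\<dots> \<le> 1/2 * dist f g" using small by (intro mult_right_mono) auto
    finally show "dist (\<Phi> f t) (\<Phi> g t) \<le> 1/2 * dist f g" .
  qed
  then obtain f where "\<Phi> f = f"
    using banach_fix_type[of "1/2" \<Phi>] by auto
  then have fixed: "apply_bcontfun f = picard_step G y0 \<delta> f"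
    using \<Phi>_apply[of f] by simp
  show ?thesis
  proof (rule that)
    show "continuous_on UNIV (apply_bcontfun f)" by simp
    fix t assume "t \<in> {0..\<delta>}"
    then show "apply_bcontfun f t = y0 + integral {0..t} (\<lambda>s. G (apply_bcontfun f s))"
      by (subst fixed) (simp add: picard_step_def)
  qed
qed

lemma lipschitz_on_cball_bounded:
  assumes "L-lipschitz_on (cball z r) F"
  obtains B where "B > 0" "\<And>y. y \<in> cball z r \<Longrightarrow> norm (F y) \<le> B"
proof
  have L: "L \<ge> 0" using lipschitz_on_nonneg[OF assms] .
  show "norm (F z) + L * \<bar>r\<bar> + 1 > 0" using L by (simp add: add_nonneg_pos)
  fix y assume y: "y \<in> cball z r"
  then have "z \<in> cball z r" using order_trans[OF zero_le_dist] by auto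
  have "norm (F y) \<le> norm (F z) + dist (F y) (F z)" by (simp add: dist_norm norm_triangle_sub)
  also have "dist (F y) (F z) \<le> L * dist y z"
    using lipschitz_onD[OF assms y \<open>z \<in> cball z r\<close>] .
  also have "L * dist y z \<le> L * \<bar>r\<bar>"
    using y L by (intro mult_left_mono) (auto simp: dist_commute)
  finally show "norm (F y) \<le> norm (F z) + L * \<bar>r\<bar> + 1" by simp
qed

lemma lipschitz_on_cball_extension:
  fixes F :: "'a::euclidean_space \<Rightarrow> 'b::real_normed_vector"
  assumes "r \<ge> 0" and lip: "L-lipschitz_on (cball y0 r) F"
    and bnd: "\<And>x. x \<in> cball y0 r \<Longrightarrow> norm (F x) \<le> B"
  obtains G where "L-lipschitz_on UNIV G" "\<And>x. norm (G x) \<le> B" "\<And>x. x \<in> cball y0 r \<Longrightarrow> G x = F x"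
proof
  have C: "closed (cball y0 r)" "convex (cball y0 r)" "cball y0 r \<noteq> {}" using \<open>r \<ge> 0\<close> by auto
  have "1-lipschitz_on UNIV (closest_point (cball y0 r))"
    using closest_point_lipschitz[OF C(2,1,3)] by (auto intro: lipschitz_onI)
  moreover have "closest_point (cball y0 r) ` UNIV \<subseteq> cball y0 r"
    using closest_point_in_set[OF C(1,3)] by auto
  ultimately have "(L * 1)-lipschitz_on UNIV (F \<circ> closest_point (cball y0 r))"
    by (intro lipschitz_on_compose lipschitz_on_subset[OF lip])
  then show "L-lipschitz_on UNIV (F \<circ> closest_point (cball y0 r))" by simp
  show "norm ((F \<circ> closest_point (cball y0 r)) x) \<le> B" for x
    using bnd closest_point_in_set[OF C(1,3)] by simp
  show "(F \<circ> closest_point (cball y0 r)) x = F x" if "x \<in> cball y0 r" for x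
    using closest_point_self[OF that] by simp
qed

lemma ode_local_solution:
  fixes F :: "'a::euclidean_space \<Rightarrow> 'a"
  assumes "r > 0" and lip: "L-lipschitz_on (cball y0 r) F"
  obtains \<delta> y where "\<delta> > 0" "y 0 = y0" "continuous_on {0..\<delta>} y"
    "\<And>t. t \<in> {0..\<delta>} \<Longrightarrow> y t \<in> cball y0 r"
    "\<And>t. t \<in> {0..\<delta>} \<Longrightarrow> (y has_vector_derivative F (y t)) (at t within {0..\<delta>})"
proof -
  have L: "L \<ge> 0" using lipschitz_on_nonneg[OF lip] .
  obtain B where "B > 0" and bnd: "\<And>x. x \<in> cball y0 r \<Longrightarrow> norm (F x) \<le> B"
    using lipschitz_on_cball_bounded[OF lip] by blast
  obtain G where G_lip: "L-lipschitz_on UNIV G" and G_bnd: "\<And>x. norm (G x) \<le> B"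
    and G_F: "\<And>x. x \<in> cball y0 r \<Longrightarrow> G x = F x"
    using lipschitz_on_cball_extension[OF _ lip bnd] \<open>r > 0\<close> by auto
  have G_cont: "continuous_on UNIV G" using lipschitz_on_continuous_on[OF G_lip] .
  \<comment> \<open>\<open>\<delta> B \<le> r\<close> keeps the solution in the ball, \<open>L \<delta> \<le> 1/2\<close> makes the Picard iteration contract.\<close>
  define \<delta> where "\<delta> = min (r / B) (1 / (2 * (L + 1)))"
  have \<delta>: "\<delta> > 0" "\<delta> * B \<le> r" "L * \<delta> \<le> 1/2"
  proof -
    show "\<delta> > 0" using \<open>r > 0\<close> \<open>B > 0\<close> L by (simp add: \<delta>_def)
    show "\<delta> * B \<le> r" using \<open>B > 0\<close> by (simp add: \<delta>_def min_def field_simps)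
    have "L * \<delta> \<le> L * (1 / (2 * (L + 1)))" using L by (intro mult_left_mono) (auto simp: \<delta>_def)
    also have "\<dots> \<le> 1/2" using L by (simp add: field_simps)
    finally show "L * \<delta> \<le> 1/2" .
  qed
  obtain y where y_cont: "continuous_on UNIV y"
    and y_eq: "\<And>t. t \<in> {0..\<delta>} \<Longrightarrow> y t = y0 + integral {0..t} (\<lambda>s. G (y s))"
    using picard_integral_equation[OF G_lip G_bnd _ \<delta>(3)] \<delta>(1) by auto
  have Gy_cont: "continuous_on {0..\<delta>} (\<lambda>s. G (y s))"
    by (rule continuous_on_compose2[OF G_cont continuous_on_subset[OF y_cont]]) auto
  have y_ball: "y t \<in> cball y0 r" if t: "t \<in> {0..\<delta>}" for t
  proof -
    have "norm (integral {0..t} (\<lambda>s. G (y s))) \<le> B * (t - 0)"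
      by (rule integral_bound) (use t G_bnd in \<open>auto intro: continuous_on_subset[OF Gy_cont]\<close>)
    also have "\<dots> \<le> B * \<delta>" using t \<open>B > 0\<close> by (intro mult_left_mono) auto
    also have "\<dots> \<le> r" using \<delta>(2) by (simp add: mult.commute)
    finally show ?thesis using y_eq[OF t] by (simp add: dist_norm)
  qed
  show ?thesis
  proof (rule that[OF \<delta>(1) _ _ y_ball])
    show "y 0 = y0" using y_eq[of 0] \<delta>(1) by simp
    show "continuous_on {0..\<delta>} y" using y_cont by (rule continuous_on_subset) simp
    show "(y has_vector_derivative F (y t)) (at t within {0..\<delta>})" if t: "t \<in> {0..\<delta>}" for t
    proof -
      have "((\<lambda>u. y0 + integral {0..u} (\<lambda>s. G (y s))) has_vector_derivative G (y t)) (at t within {0..\<delta>})"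
        using integral_has_vector_derivative[OF Gy_cont t] by (auto intro!: derivative_eq_intros)
      from has_vector_derivative_transform[OF t y_eq this]
      show ?thesis using G_F[OF y_ball[OF t]] by simp
    qed
  qed
qed

section \<open>Integral curves of tangent fields on submanifolds\<close>

lemma continuous_on_cball_into_open:
  assumes "open W" "continuous_on W f" "y0 \<in> W" "open S" "f y0 \<in> S"
  obtains r where "r > 0" "cball y0 r \<subseteq> W" "\<And>y. y \<in> cball y0 r \<Longrightarrow> f y \<in> S"
proof -
  have "open (W \<inter> f -` S)" by (rule continuous_open_preimage[OF assms(2,1,4)])
  moreover have "y0 \<in> W \<inter> f -` S" using assms(3,5) by auto
  ultimately obtain r where "r > 0" "cball y0 r \<subseteq> W \<inter> f -` S" using open_contains_cball by blast
  then show ?thesis using that by blast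
qed

lemma onorm_bounded_on_compact:
  fixes f' :: "'a::metric_space \<Rightarrow> 'b::euclidean_space \<Rightarrow> 'c::real_normed_vector"
  assumes "compact S" "\<And>v. continuous_on S (\<lambda>y. f' y v)" "\<And>y. y \<in> S \<Longrightarrow> bounded_linear (f' y)"
  obtains K where "K \<ge> 0" "\<And>y. y \<in> S \<Longrightarrow> onorm (f' y) \<le> K"
proof -
  have "continuous_on S (\<lambda>y. \<Sum>i\<in>Basis. norm (f' y i))"
    by (intro continuous_intros assms(2))
  then have "bounded ((\<lambda>y. \<Sum>i\<in>Basis. norm (f' y i)) ` S)"
    using assms(1) by (intro compact_imp_bounded compact_continuous_image)
  then obtain K where K: "K > 0" "\<And>y. y \<in> S \<Longrightarrow> norm (\<Sum>i\<in>Basis. norm (f' y i)) \<le> K"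
    unfolding bounded_pos by blast
  show ?thesis
  proof (rule that)
    show "K \<ge> 0" using K(1) by simp
    fix y assume "y \<in> S"
    have "onorm (f' y) \<le> (\<Sum>i\<in>Basis. norm (f' y i))"
      by (rule onorm_componentwise[OF assms(3)[OF \<open>y \<in> S\<close>]])
    also have "\<dots> \<le> K"
      using K(2)[OF \<open>y \<in> S\<close>] abs_ge_self[of "\<Sum>i\<in>Basis. norm (f' y i)"] by simp
    finally show "onorm (f' y) \<le> K" .
  qed
qed

lemma onorm_compose_le:
  assumes "bounded_linear f" "bounded_linear g" "onorm f \<le> A" "onorm g \<le> B"
  shows "onorm (f \<circ> g) \<le> A * B"
proof -
  have "onorm (f \<circ> g) \<le> onorm f * onorm g" using onorm_compose[OF assms(1,2)] .
  also have "\<dots> \<le> A * B"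
    using assms onorm_pos_le[OF assms(1)] onorm_pos_le[OF assms(2)] by (intro mult_mono) auto
  finally show ?thesis .
qed

lemma onorm_inv_le_2:
  fixes A :: "'a::euclidean_space \<Rightarrow>\<^sub>L 'a"
  assumes "bij (blinfun_apply A)" and "norm (A - id_blinfun) < 1/2"
  shows "onorm (inv (blinfun_apply A)) \<le> 2"
proof (rule onorm_le)
  fix v
  define u where "u = inv (blinfun_apply A) v"
  have Au: "blinfun_apply A u = v"
    unfolding u_def using assms(1) by (simp add: bij_is_surj surj_f_inv_f)
  have "norm (u - v) = norm (blinfun_apply (A - id_blinfun) u)"
    using Au by (simp add: blinfun.diff_left norm_minus_commute)
  also have "\<dots> \<le> norm (A - id_blinfun) * norm u" by (rule norm_blinfun)
  also have "\<dots> \<le> 1/2 * norm u" using assms(2) by (intro mult_right_mono) auto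
  finally have "norm (u - v) \<le> 1/2 * norm u" .
  moreover have "norm u \<le> norm v + norm (u - v)" by (rule norm_triangle_sub)
  ultimately show "norm (inv (blinfun_apply A) v) \<le> 2 * norm v" unfolding u_def[symmetric] by linarith
qed

lemma smooth_on_imp_C1:
  assumes "smooth_on U f"
  obtains f' where "\<And>x. x \<in> U \<Longrightarrow> (f has_derivative f' x) (at x)" "\<And>v. continuous_on U (\<lambda>x. f' x v)"
proof -
  have "Ck_on (Suc 0) U f" using assms unfolding smooth_on_def by blast
  with that show ?thesis by auto
qed

lemma Ck_on_uminus: "Ck_on k U f \<Longrightarrow> Ck_on k U (\<lambda>x. - f x)"
proof (induction k arbitrary: f)
  case 0
  then show ?case by (simp add: continuous_on_minus)
next
  case (Suc k)
  then obtain f' where "\<forall>x\<in>U. (f has_derivative f' x) (at x)" "\<forall>v. Ck_on k U (\<lambda>x. f' x v)"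
    by auto
  then show ?case
    using Suc.IH by (auto intro!: exI[of _ "\<lambda>x v. - f' x v"] derivative_intros)
qed

lemma smooth_fun_on_uminus:
  assumes "smooth_fun_on S f"
  shows "smooth_fun_on S (\<lambda>x. - f x)"
  unfolding smooth_fun_on_def
proof
  fix p assume "p \<in> S"
  then obtain U h where "open U" "p \<in> U" "smooth_on U h" "\<forall>q\<in>S \<inter> U. f q = h q"
    using assms unfolding smooth_fun_on_def by blast
  then show "\<exists>U h. open U \<and> p \<in> U \<and> smooth_on U h \<and> (\<forall>q\<in>S \<inter> U. - f q = h q)"
    unfolding smooth_on_def by (intro exI[of _ U] exI[of _ "\<lambda>x. - h x"]) (auto intro: Ck_on_uminus)
qed

lemma tangent_space_uminus:
  assumes "v \<in> tangent_space M p"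
  shows "- v \<in> tangent_space M p"
proof -
  obtain c where c: "c 0 = p" "\<forall>t\<in>{-1<..<1}. c t \<in> M" "(c has_vector_derivative v) (at 0)"
    using assms unfolding tangent_space_def by blast
  have "(uminus has_vector_derivative -1) (at (0::real))"
    by (auto intro!: derivative_eq_intros simp: has_vector_derivative_def)
  then have "((\<lambda>t. c (- t)) has_vector_derivative - v) (at 0)"
    using vector_diff_chain_at[of uminus "-1" 0 c v] c(3) by (simp add: o_def)
  moreover have "\<forall>t\<in>{-1<..<1}. c (- t) \<in> M" using c(2) by auto
  ultimately show ?thesis
    unfolding tangent_space_def using c(1) by (intro CollectI exI[of _ "\<lambda>t. c (- t)"]) auto
qed

lemma submanifoldE:
  fixes M :: "'e::euclidean_space set"
  assumes "submanifold TYPE('d::euclidean_space) M" "p \<in> M"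
  obtains V :: "'d::euclidean_space set" and U \<phi> \<psi> where "open V" "open U" "p \<in> U" "smooth_on V \<phi>"
    "\<forall>x\<in>V. inj (frechet_derivative \<phi> (at x))" "homeomorphism V (M \<inter> U) \<phi> \<psi>"
proof -
  have "\<exists>(V::'d set) U \<phi> \<psi>. open V \<and> open U \<and> p \<in> U \<and> smooth_on V \<phi> \<and>
      (\<forall>x\<in>V. inj (frechet_derivative \<phi> (at x))) \<and> homeomorphism V (M \<inter> U) \<phi> \<psi>"
    using assms unfolding submanifold_def by (rule bspec)
  then show ?thesis using that by (elim exE conjE) assumption
qed

lemma retraction_derivative_fixes_tangent_space:
  assumes "open G" "p \<in> G" and retract: "\<And>q. q \<in> M \<inter> G \<Longrightarrow> R q = q"
    and R': "(R has_derivative R') (at p)" and "w \<in> tangent_space M p"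
  shows "R' w = w"
proof -
  obtain c where c: "c 0 = p" "\<forall>t\<in>{-1<..<1}. c t \<in> M" "(c has_vector_derivative w) (at 0)"
    using assms(5) unfolding tangent_space_def by blast
  have "(c \<longlongrightarrow> p) (at 0)"
    using has_vector_derivative_continuous[OF c(3)] c(1) unfolding continuous_at by simp
  then have "eventually (\<lambda>t. c t \<in> G) (at 0)"
    using assms(1,2) by (rule topological_tendstoD)
  then obtain d where "d > 0" and d: "\<And>t. t \<noteq> 0 \<Longrightarrow> dist t 0 < d \<Longrightarrow> c t \<in> G"
    unfolding eventually_at by blast
  have Rc: "R (c t) = c t" if "t \<in> ball 0 (min d 1)" for t
  proof -
    have "c t \<in> M" using c(2) that by (auto simp: dist_real_def abs_less_iff)
    moreover have "c t \<in> G" using d[of t] that c(1) assms(2) by (cases "t = 0") auto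
    ultimately show ?thesis by (rule retract[OF IntI])
  qed
  have "(R has_derivative R') (at (c 0))" using R' c(1) by simp
  with c(3) have "((\<lambda>t. R (c t)) has_derivative (\<lambda>h. R' (h *\<^sub>R w))) (at 0)"
    unfolding has_vector_derivative_def by (rule has_derivative_compose)
  moreover have "R' (h *\<^sub>R w) = h *\<^sub>R R' w" for h
    using linear_scale[OF has_derivative_linear[OF R']] .
  ultimately have "((\<lambda>t. R (c t)) has_vector_derivative R' w) (at 0)"
    unfolding has_vector_derivative_def by simp
  then have "(c has_vector_derivative R' w) (at 0)"
    by (rule has_vector_derivative_transform_within_open[where S = "ball 0 (min d 1)"])
       (use \<open>d > 0\<close> Rc in auto)
  from vector_derivative_unique_at[OF c(3) this] show ?thesis by (rule sym)
qed

lemma immersion_local_left_inverse: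
  fixes \<phi> :: "'d::euclidean_space \<Rightarrow> 'e::euclidean_space"
  assumes "open V" "x0 \<in> V"
    and \<phi>'_der: "\<And>x. x \<in> V \<Longrightarrow> (\<phi> has_derivative \<phi>' x) (at x)"
    and \<phi>'_cont: "\<And>v. continuous_on V (\<lambda>x. \<phi>' x v)"
    and "inj (\<phi>' x0)"
  obtains P :: "'e \<Rightarrow> 'd" and U1 W0 ginv ginv' r where
    "linear P" "open U1" "U1 \<subseteq> V" "x0 \<in> U1" "homeomorphism U1 W0 (\<lambda>x. P (\<phi> x)) ginv"
    "r > 0" "cball (P (\<phi> x0)) r \<subseteq> W0"
    "\<And>y. y \<in> W0 \<Longrightarrow> (ginv has_derivative ginv' y) (at y)"
    "\<And>y. y \<in> cball (P (\<phi> x0)) r \<Longrightarrow> onorm (ginv' y) \<le> 2"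
proof -
  have bl\<phi>': "bounded_linear (\<phi>' x)" if "x \<in> V" for x
    using has_derivative_bounded_linear[OF \<phi>'_der[OF that]] .
  obtain P where P: "linear P" "P \<circ> \<phi>' x0 = id"
    using linear_injective_left_inverse[OF has_derivative_linear[OF \<phi>'_der[OF assms(2)]] assms(5)] by blast
  have blP: "bounded_linear P" using P(1) by (simp add: linear_conv_bounded_linear)
  define \<theta>' where "\<theta>' x = Blinfun (\<lambda>v. P (\<phi>' x v))" for x
  have \<theta>'_apply: "blinfun_apply (\<theta>' x) = (\<lambda>v. P (\<phi>' x v))" if "x \<in> V" for x
    unfolding \<theta>'_def
    by (rule bounded_linear_Blinfun_apply) (rule bounded_linear_compose[OF blP bl\<phi>'[OF that]])
  have \<theta>_der: "((\<lambda>x. P (\<phi> x)) has_derivative blinfun_apply (\<theta>' x)) (at x)" if "x \<in> V" for x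
    unfolding \<theta>'_apply[OF that] by (rule bounded_linear.has_derivative[OF blP \<phi>'_der[OF that]])
  have \<theta>'_cont: "continuous_on V \<theta>'"
  proof (rule continuous_on_blinfun_componentwise)
    fix i :: 'd
    have "continuous_on V (\<lambda>x. P (\<phi>' x i))"
      by (rule bounded_linear.continuous_on[OF blP \<phi>'_cont])
    then show "continuous_on V (\<lambda>x. blinfun_apply (\<theta>' x) i)"
      by (rule continuous_on_eq) (simp add: \<theta>'_apply)
  qed
  have \<theta>'_x0: "\<theta>' x0 = id_blinfun"
    by (rule blinfun_eqI) (simp add: \<theta>'_apply[OF assms(2)] pointfree_idE[OF P(2)])
  then have "id_blinfun o\<^sub>L \<theta>' x0 = id_blinfun" by (simp add: blinfun_eqI)
  then obtain U1 W0 ginv ginv' where ift: "open U1" "U1 \<subseteq> V" "x0 \<in> U1" "open W0" "P (\<phi> x0) \<in> W0"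
      "homeomorphism U1 W0 (\<lambda>x. P (\<phi> x)) ginv"
      "\<And>y. y \<in> W0 \<Longrightarrow> (ginv has_derivative (ginv' y)) (at y)"
      "\<And>y. y \<in> W0 \<Longrightarrow> ginv' y = inv (blinfun_apply (\<theta>'(ginv y)))"
      "\<And>y. y \<in> W0 \<Longrightarrow> bij (blinfun_apply (\<theta>'(ginv y)))"
    using inverse_function_theorem[OF assms(1) \<theta>_der \<theta>'_cont assms(2)] by blast
  \<comment> \<open>Near \<open>P (\<phi> x0)\<close> the differential of \<open>P \<circ> \<phi>\<close> stays within \<open>1/2\<close> of the identity, so its inverse has norm at most \<open>2\<close>.\<close>
  have "continuous_on W0 (\<lambda>y. \<theta>' (ginv y))"
    by (rule continuous_on_compose2[OF \<theta>'_cont homeomorphism_cont2[OF ift(6)]])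
       (use homeomorphism_image2[OF ift(6)] ift(2) in blast)
  moreover have "\<theta>' (ginv (P (\<phi> x0))) \<in> ball id_blinfun (1/2)"
    using homeomorphism_apply1[OF ift(6,3)] \<theta>'_x0 by simp
  ultimately obtain r where r: "r > 0" "cball (P (\<phi> x0)) r \<subseteq> W0"
    and near_id: "\<And>y. y \<in> cball (P (\<phi> x0)) r \<Longrightarrow> \<theta>' (ginv y) \<in> ball id_blinfun (1/2)"
    using continuous_on_cball_into_open[OF ift(4) _ ift(5) open_ball] by blast
  have "onorm (ginv' y) \<le> 2" if "y \<in> cball (P (\<phi> x0)) r" for y
    unfolding ift(8)[OF subsetD[OF r(2) that]]
    by (rule onorm_inv_le_2[OF ift(9)[OF subsetD[OF r(2) that]]])
       (use near_id[OF that] in \<open>simp add: dist_norm norm_minus_commute\<close>)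
  with P(1) ift(1-3,6) r ift(7) show ?thesis by (rule that)
qed

lemma chart_local_retraction:
  assumes chart: "homeomorphism V (M \<inter> U) \<phi> \<psi>" and "open U" "open U1" "U1 \<subseteq> V"
    and hom: "homeomorphism U1 W0 (\<lambda>x. P (\<phi> x)) ginv" and "y \<in> W0"
  obtains G where "open G" "\<phi> (ginv y) \<in> G" "\<And>q. q \<in> M \<inter> G \<Longrightarrow> \<phi> (ginv (P q)) = q"
proof -
  have "openin (top_of_set (M \<inter> U)) ((M \<inter> U) \<inter> \<psi> -` U1)"
    using homeomorphism_cont2[OF chart] assms(3) unfolding continuous_openin_preimage_eq by blast
  then obtain G where G: "open G" "(M \<inter> U) \<inter> \<psi> -` U1 = (M \<inter> U) \<inter> G"
    by (auto simp: openin_open)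
  show ?thesis
  proof (rule that[of "U \<inter> G"])
    show "open (U \<inter> G)" using assms(2) G(1) by blast
    have "ginv y \<in> U1" using homeomorphism_image2[OF hom] assms(6) by blast
    then have "\<phi> (ginv y) \<in> M \<inter> U" "\<psi> (\<phi> (ginv y)) = ginv y"
      using homeomorphism_image1[OF chart] homeomorphism_apply1[OF chart] assms(4) by blast+
    then show "\<phi> (ginv y) \<in> U \<inter> G" using G(2) \<open>ginv y \<in> U1\<close> by blast
    fix q assume "q \<in> M \<inter> (U \<inter> G)"
    then have q: "q \<in> M \<inter> U" "\<psi> q \<in> U1" using G(2) by blast+
    then have "P (\<phi> (\<psi> q)) = P q" using homeomorphism_apply2[OF chart] by simp
    then show "\<phi> (ginv (P q)) = q"
      using homeomorphism_apply1[OF hom q(2)] homeomorphism_apply2[OF chart q(1)] by simp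
  qed
qed

lemma submanifold_local_coordinates:
  fixes M :: "'e::euclidean_space set"
  assumes "submanifold TYPE('d::euclidean_space) M" "p \<in> M"
  obtains W :: "'d::euclidean_space set" and z \<Phi> and P :: "'e \<Rightarrow> 'd" and K \<Phi>'
  where "open W" "z \<in> W" "\<Phi> z = p" "\<Phi> ` W \<subseteq> M" "linear P" "K \<ge> 0"
    "\<And>y. y \<in> W \<Longrightarrow> (\<Phi> has_derivative \<Phi>' y) (at y)"
    "\<And>y. y \<in> W \<Longrightarrow> onorm (\<Phi>' y) \<le> K"
    "\<And>y w. y \<in> W \<Longrightarrow> w \<in> tangent_space M (\<Phi> y) \<Longrightarrow> \<Phi>' y (P w) = w"
proof -
  obtain V :: "'d set" and U \<phi> \<psi> where chart: "open V" "open U" "p \<in> U" "smooth_on V \<phi>"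
      "\<forall>x\<in>V. inj (frechet_derivative \<phi> (at x))" "homeomorphism V (M \<inter> U) \<phi> \<psi>"
    using submanifoldE[OF assms] by blast
  obtain \<phi>' where \<phi>'_der: "\<And>x. x \<in> V \<Longrightarrow> (\<phi> has_derivative \<phi>' x) (at x)"
    and \<phi>'_cont: "\<And>v. continuous_on V (\<lambda>x. \<phi>' x v)"
    using smooth_on_imp_C1[OF chart(4)] by blast
  define x0 where "x0 = \<psi> p"
  have pMU: "p \<in> M \<inter> U" using assms(2) chart(3) by blast
  have x0V: "x0 \<in> V" using homeomorphism_image2[OF chart(6)] pMU unfolding x0_def by blast
  have \<phi>x0: "\<phi> x0 = p" using homeomorphism_apply2[OF chart(6) pMU] unfolding x0_def .
  have "inj (\<phi>' x0)" using chart(5) x0V frechet_derivative_at[OF \<phi>'_der[OF x0V]] by simp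
  obtain P :: "'e \<Rightarrow> 'd" and U1 W0 ginv ginv' r where P: "linear P"
      and U1: "open U1" "U1 \<subseteq> V" "x0 \<in> U1" and hom: "homeomorphism U1 W0 (\<lambda>x. P (\<phi> x)) ginv"
      and r: "r > 0" "cball (P (\<phi> x0)) r \<subseteq> W0"
      and ginv'_der: "\<And>y. y \<in> W0 \<Longrightarrow> (ginv has_derivative ginv' y) (at y)"
      and ginv'_bound: "\<And>y. y \<in> cball (P (\<phi> x0)) r \<Longrightarrow> onorm (ginv' y) \<le> 2"
    by (rule immersion_local_left_inverse[OF chart(1) x0V, where \<phi>' = \<phi>'])
       (use \<phi>'_der \<phi>'_cont \<open>inj (\<phi>' x0)\<close> in blast)+
  note r = r[unfolded \<phi>x0] and ginv'_bound = ginv'_bound[unfolded \<phi>x0]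
  have ginv_V: "ginv y \<in> V" if "y \<in> W0" for y using homeomorphism_image2[OF hom] U1(2) that by blast
  have "continuous_on (cball (P p) r) ginv"
    using homeomorphism_cont2[OF hom] r(2) by (rule continuous_on_subset)
  then have "continuous_on (cball (P p) r) (\<lambda>y. \<phi>' (ginv y) v)" for v
    by (rule continuous_on_compose2[OF \<phi>'_cont]) (use ginv_V r(2) in blast)
  then obtain K where K: "K \<ge> 0" "\<And>y. y \<in> cball (P p) r \<Longrightarrow> onorm (\<phi>' (ginv y)) \<le> K"
    using onorm_bounded_on_compact[OF compact_cball, where f' = "\<lambda>y. \<phi>' (ginv y)"]
      has_derivative_bounded_linear[OF \<phi>'_der] ginv_V r(2) by blast
  define \<Phi> where "\<Phi> y = \<phi> (ginv y)" for y
  define \<Phi>' where "\<Phi>' y = \<phi>' (ginv y) \<circ> ginv' y" for y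
  have \<Phi>_der: "(\<Phi> has_derivative \<Phi>' y) (at y)" if "y \<in> W0" for y
    unfolding \<Phi>_def \<Phi>'_def o_def
    using has_derivative_compose[OF ginv'_der[OF that] \<phi>'_der[OF ginv_V[OF that]]] .
  have \<Phi>_M: "\<Phi> y \<in> M \<inter> U" if "y \<in> W0" for y
    using homeomorphism_image1[OF chart(6)] ginv_V[OF that] unfolding \<Phi>_def by blast
  show ?thesis
  proof (rule that[where W = "ball (P p) r" and z = "P p" and \<Phi> = \<Phi> and \<Phi>' = \<Phi>' and P = P and K = "K * 2"])
    show "open (ball (P p) r)" "P p \<in> ball (P p) r" "linear P" "K * 2 \<ge> 0" using r K P by auto
    show "\<Phi> (P p) = p"
      unfolding \<Phi>_def using homeomorphism_apply1[OF hom U1(3)] \<phi>x0 by simp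
    show "\<Phi> ` ball (P p) r \<subseteq> M" using \<Phi>_M ball_subset_cball r(2) by blast
    fix y assume "y \<in> ball (P p) r"
    then have y: "y \<in> cball (P p) r" "y \<in> W0" using r(2) by auto
    show "(\<Phi> has_derivative \<Phi>' y) (at y)" using \<Phi>_der[OF y(2)] .
    have bl_ginv': "bounded_linear (ginv' y)"
      using has_derivative_bounded_linear[OF ginv'_der[OF y(2)]] .
    show "onorm (\<Phi>' y) \<le> K * 2"
      unfolding \<Phi>'_def using has_derivative_bounded_linear[OF \<phi>'_der[OF ginv_V[OF y(2)]]] bl_ginv'
      by (rule onorm_compose_le[OF _ _ K(2)[OF y(1)] ginv'_bound[OF y(1)]])
    show "\<Phi>' y (P w) = w" if "w \<in> tangent_space M (\<Phi> y)" for w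
    proof -
      obtain G where G: "open G" "\<Phi> y \<in> G" "\<And>q. q \<in> M \<inter> G \<Longrightarrow> \<Phi> (P q) = q"
        using chart_local_retraction[OF chart(6) chart(2) U1(1,2) hom y(2)] unfolding \<Phi>_def by blast
      have "P (\<Phi> y) = y" unfolding \<Phi>_def using homeomorphism_apply2[OF hom y(2)] .
      then have "(\<Phi> has_derivative \<Phi>' y) (at (P (\<Phi> y)))" using \<Phi>_der[OF y(2)] by simp
      then have "((\<lambda>q. \<Phi> (P q)) has_derivative (\<lambda>v. \<Phi>' y (P v))) (at (\<Phi> y))"
        by (rule has_derivative_compose[OF linear_imp_has_derivative[OF P]])
      from retraction_derivative_fixes_tangent_space[OF G this that] show ?thesis by simp
    qed
  qed
qed

lemma lipschitz_on_cball_C1_compose: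
  fixes \<Phi> :: "'a::euclidean_space \<Rightarrow> 'b::euclidean_space" and h :: "'b \<Rightarrow> 'c::euclidean_space"
    and P :: "'c \<Rightarrow> 'd::euclidean_space"
  assumes \<Phi>_der: "\<And>y. y \<in> cball z r \<Longrightarrow> (\<Phi> has_derivative \<Phi>' y) (at y)"
    and "K \<ge> 0" and \<Phi>'_bound: "\<And>y. y \<in> cball z r \<Longrightarrow> onorm (\<Phi>' y) \<le> K"
    and img: "\<Phi> ` cball z r \<subseteq> U"
    and h_der: "\<And>x. x \<in> U \<Longrightarrow> (h has_derivative h' x) (at x)"
    and h'_cont: "\<And>v. continuous_on U (\<lambda>x. h' x v)"
    and "linear P"
  obtains L where "L-lipschitz_on (cball z r) (\<lambda>y. P (h (\<Phi> y)))"
proof -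
  have blP: "bounded_linear P" using \<open>linear P\<close> by (simp add: linear_conv_bounded_linear)
  have \<Phi>U: "\<Phi> y \<in> U" if "y \<in> cball z r" for y using img that by blast
  have bl\<Phi>': "bounded_linear (\<Phi>' y)" if "y \<in> cball z r" for y
    using has_derivative_bounded_linear[OF \<Phi>_der[OF that]] .
  have blh': "bounded_linear (h' (\<Phi> y))" if "y \<in> cball z r" for y
    using has_derivative_bounded_linear[OF h_der[OF \<Phi>U[OF that]]] .
  have "continuous_on (cball z r) \<Phi>"
    by (rule has_derivative_continuous_on) (rule has_derivative_at_withinI[OF \<Phi>_der])
  then have "continuous_on (cball z r) (\<lambda>y. h' (\<Phi> y) v)" for v
    by (rule continuous_on_compose2[OF h'_cont]) (use \<Phi>U in blast)
  then obtain Kh where Kh: "Kh \<ge> 0" "\<And>y. y \<in> cball z r \<Longrightarrow> onorm (h' (\<Phi> y)) \<le> Kh"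
    using onorm_bounded_on_compact[OF compact_cball, where f' = "\<lambda>y. h' (\<Phi> y)"] blh' by blast
  define F' where "F' y = P \<circ> (h' (\<Phi> y) \<circ> \<Phi>' y)" for y
  have "onorm (F' y) \<le> onorm P * (Kh * K)" if y: "y \<in> cball z r" for y
  proof -
    have "bounded_linear (h' (\<Phi> y) \<circ> \<Phi>' y)"
      unfolding o_def by (rule bounded_linear_compose[OF blh'[OF y] bl\<Phi>'[OF y]])
    moreover have "onorm (h' (\<Phi> y) \<circ> \<Phi>' y) \<le> Kh * K"
      using blh'[OF y] bl\<Phi>'[OF y] Kh(2)[OF y] \<Phi>'_bound[OF y] by (rule onorm_compose_le)
    ultimately show ?thesis
      unfolding F'_def by (rule onorm_compose_le[OF blP _ order_refl])
  qed
  moreover have "((\<lambda>y. P (h (\<Phi> y))) has_derivative F' y) (at y within cball z r)" if "y \<in> cball z r" for y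
    unfolding F'_def o_def
    using has_derivative_compose[OF \<Phi>_der[OF that] h_der[OF \<Phi>U[OF that]]]
    by (rule has_derivative_at_withinI[OF bounded_linear.has_derivative[OF blP]])
  moreover have "onorm P * (Kh * K) \<ge> 0"
    using Kh(1) \<open>K \<ge> 0\<close> onorm_pos_le[OF blP] by simp
  ultimately have "(onorm P * (Kh * K))-lipschitz_on (cball z r) (\<lambda>y. P (h (\<Phi> y)))"
    by (intro bounded_derivative_imp_lipschitz convex_cball)
  then show ?thesis by (rule that)
qed

lemma tangent_field_integral_curve:
  fixes M :: "'e::euclidean_space set" and X :: "'e \<Rightarrow> 'e"
  assumes sub: "submanifold TYPE('d::euclidean_space) M" and X: "smooth_fun_on M X"
    and tangent: "\<And>q. q \<in> M \<Longrightarrow> X q \<in> tangent_space M q" and "p \<in> M"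
  obtains \<delta> \<gamma> where "\<delta> > 0" "\<gamma> 0 = p" "\<gamma> ` {0..\<delta>} \<subseteq> M" "continuous_on {0..\<delta>} (\<lambda>t. X (\<gamma> t))"
    "\<And>t. t \<in> {0..\<delta>} \<Longrightarrow> (\<gamma> has_vector_derivative X (\<gamma> t)) (at t within {0..\<delta>})"
proof -
  obtain W :: "'d set" and z \<Phi> P K \<Phi>' where coords: "open W" "z \<in> W" "\<Phi> z = p" "\<Phi> ` W \<subseteq> M" "linear P" "K \<ge> 0"
    and \<Phi>_der: "\<And>y. y \<in> W \<Longrightarrow> (\<Phi> has_derivative \<Phi>' y) (at y)"
    and \<Phi>'_bound: "\<And>y. y \<in> W \<Longrightarrow> onorm (\<Phi>' y) \<le> K"
    and \<Phi>'_P: "\<And>y w. y \<in> W \<Longrightarrow> w \<in> tangent_space M (\<Phi> y) \<Longrightarrow> \<Phi>' y (P w) = w"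
    using submanifold_local_coordinates[OF sub \<open>p \<in> M\<close>] by blast
  obtain U h where h: "open U" "p \<in> U" "smooth_on U h" "\<forall>q\<in>M \<inter> U. X q = h q"
    using X \<open>p \<in> M\<close> unfolding smooth_fun_on_def by blast
  obtain h' where h': "\<And>x. x \<in> U \<Longrightarrow> (h has_derivative h' x) (at x)" "\<And>v. continuous_on U (\<lambda>x. h' x v)"
    using smooth_on_imp_C1[OF h(3)] by blast
  have "continuous_on W \<Phi>"
    by (rule has_derivative_continuous_on) (rule has_derivative_at_withinI[OF \<Phi>_der])
  then obtain r where r: "r > 0" "cball z r \<subseteq> W" "\<And>y. y \<in> cball z r \<Longrightarrow> \<Phi> y \<in> U"
    using continuous_on_cball_into_open[OF coords(1) _ coords(2) h(1)] h(2) coords(3) by blast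
  \<comment> \<open>In the coordinates \<open>\<Phi>\<close>, the field \<open>X\<close> becomes \<open>F\<close>; its integral curves are mapped back by \<open>\<Phi>\<close>.\<close>
  define F where "F y = P (h (\<Phi> y))" for y
  obtain L where L: "L-lipschitz_on (cball z r) F"
    using lipschitz_on_cball_C1_compose[of z r \<Phi> \<Phi>' K U h h' P] \<Phi>_der \<Phi>'_bound r h'
      coords(5,6) unfolding F_def by blast
  obtain \<delta> y where y: "\<delta> > 0" "y 0 = z" "continuous_on {0..\<delta>} y"
      "\<And>t. t \<in> {0..\<delta>} \<Longrightarrow> y t \<in> cball z r"
      "\<And>t. t \<in> {0..\<delta>} \<Longrightarrow> (y has_vector_derivative F (y t)) (at t within {0..\<delta>})"
    using ode_local_solution[OF r(1) L] by blast
  have yW: "y t \<in> W" if "t \<in> {0..\<delta>}" for t using y(4)[OF that] r(2) by blast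
  have \<gamma>_in: "\<Phi> (y t) \<in> M \<inter> U" if "t \<in> {0..\<delta>}" for t
    using coords(4) yW[OF that] r(3)[OF y(4)[OF that]] by blast
  show ?thesis
  proof (rule that[where \<gamma> = "\<lambda>t. \<Phi> (y t)"])
    show "\<delta> > 0" "\<Phi> (y 0) = p" using y(1,2) coords(3) by simp_all
    show "(\<lambda>t. \<Phi> (y t)) ` {0..\<delta>} \<subseteq> M" using \<gamma>_in by blast
    have "continuous_on {0..\<delta>} (\<lambda>t. \<Phi> (y t))"
      by (rule continuous_on_compose2[OF \<open>continuous_on W \<Phi>\<close> y(3)]) (use yW in blast)
    moreover have "continuous_on U h"
      by (rule has_derivative_continuous_on) (rule has_derivative_at_withinI[OF h'(1)])
    ultimately have "continuous_on {0..\<delta>} (\<lambda>t. h (\<Phi> (y t)))"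
      using continuous_on_compose2[of U h "{0..\<delta>}" "\<lambda>t. \<Phi> (y t)"] \<gamma>_in by blast
    then show "continuous_on {0..\<delta>} (\<lambda>t. X (\<Phi> (y t)))"
      by (rule continuous_on_eq) (use \<gamma>_in h(4) in auto)
    fix t assume t: "t \<in> {0..\<delta>}"
    have "((\<lambda>t. \<Phi> (y t)) has_derivative (\<lambda>s. \<Phi>' (y t) (s *\<^sub>R F (y t)))) (at t within {0..\<delta>})"
      using has_derivative_compose[OF y(5)[OF t, unfolded has_vector_derivative_def] \<Phi>_der[OF yW[OF t]]] .
    moreover have "\<Phi>' (y t) (s *\<^sub>R F (y t)) = s *\<^sub>R \<Phi>' (y t) (F (y t))" for s
      using linear_scale[OF has_derivative_linear[OF \<Phi>_der[OF yW[OF t]]]] .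
    moreover have "\<Phi>' (y t) (F (y t)) = X (\<Phi> (y t))"
      using \<Phi>'_P[OF yW[OF t] tangent] \<gamma>_in[OF t] h(4) unfolding F_def by auto
    ultimately show "((\<lambda>t. \<Phi> (y t)) has_vector_derivative X (\<Phi> (y t))) (at t within {0..\<delta>})"
      unfolding has_vector_derivative_def by simp
  qed
qed

section \<open>Chronological diamonds\<close>

lemma topology_from_local_base:
  fixes \<B> :: "'a set set"
  assumes local_base: "\<And>S T x. S \<in> \<B> \<Longrightarrow> T \<in> \<B> \<Longrightarrow> x \<in> S \<inter> T \<Longrightarrow> \<exists>W\<in>\<B>. x \<in> W \<and> W \<subseteq> S \<inter> T"
  shows "\<exists>X. topspace X = \<Union>\<B> \<and> (\<forall>W\<in>\<B>. openin X W) \<and> (\<forall>U. openin X U \<longrightarrow> (\<exists>\<U>\<subseteq>\<B>. \<Union>\<U> = U))"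
proof -
  let ?open = "arbitrary union_of (\<lambda>W. W \<in> \<B>)"
  have union_iff: "?open U \<longleftrightarrow> (\<exists>\<U>\<subseteq>\<B>. \<Union>\<U> = U)" for U
    by (auto simp: union_of_def arbitrary_def)
  have "istopology ?open"
    unfolding istopology_base_eq union_iff
  proof (intro allI impI)
    fix S T assume "S \<in> \<B> \<and> T \<in> \<B>"
    then show "\<exists>\<U>\<subseteq>\<B>. \<Union>\<U> = S \<inter> T"
      using local_base by (intro exI[of _ "{W \<in> \<B>. W \<subseteq> S \<inter> T}"]) blast
  qed
  then have open_X: "openin (topology ?open) = ?open" by simp
  have "topspace (topology ?open) = \<Union>\<B>"
    unfolding topspace_def open_X union_iff by blast
  moreover have "?open W" if "W \<in> \<B>" for W
    using that unfolding union_iff by (intro exI[of _ "{W}"]) auto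
  ultimately show ?thesis
    using open_X union_iff by metis
qed

lemma chron_along_time_orientation:
  assumes timelike: "\<And>q. q \<in> M \<Longrightarrow> T q \<in> D q \<and> g q (T q) (T q) < 0"
    and "a < b" "\<gamma> ` {a..b} \<subseteq> M" "continuous_on {a..b} (\<lambda>t. T (\<gamma> t))"
    and "\<And>t. t \<in> {a..b} \<Longrightarrow> (\<gamma> has_vector_derivative T (\<gamma> t)) (at t within {a..b})"
  shows "chron M D g T (\<gamma> a) (\<gamma> b)"
proof -
  have "tfd_curve M D g T a b \<gamma>"
  proof (rule tfd_curveI_C1[OF assms(2-5)])
    fix t assume "t \<in> {a<..<b}"
    then have "\<gamma> t \<in> M" using assms(3) by auto
    then show "T (\<gamma> t) \<in> D (\<gamma> t) \<and> g (\<gamma> t) (T (\<gamma> t)) (T (\<gamma> t)) < 0 \<and> g (\<gamma> t) (T (\<gamma> t)) (T (\<gamma> t)) < 0"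
      using timelike by blast
  qed
  then show ?thesis unfolding chron_def using \<open>a < b\<close> by blast
qed

lemma sub_space_time_chron_through:
  assumes sst: "sub_space_time TYPE('d::euclidean_space) M D k g T" and "x \<in> M"
  obtains a b where "chron M D g T a x" "chron M D g T x b"
proof -
  have sub: "submanifold TYPE('d) M" and T_smooth: "smooth_fun_on M T"
    and timelike: "\<And>q. q \<in> M \<Longrightarrow> T q \<in> D q \<and> g q (T q) (T q) < 0"
    using sst unfolding sub_space_time_def by auto
  have "D q \<subseteq> tangent_space M q" if "q \<in> M" for q
    using sst that unfolding sub_space_time_def smooth_distribution_def by blast
  then have T_tangent: "T q \<in> tangent_space M q" if "q \<in> M" for q
    using timelike that by blast
  obtain \<delta> \<gamma> where \<gamma>: "\<delta> > 0" "\<gamma> 0 = x" "\<gamma> ` {0..\<delta>} \<subseteq> M" "continuous_on {0..\<delta>} (\<lambda>t. T (\<gamma> t))"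
      "\<And>t. t \<in> {0..\<delta>} \<Longrightarrow> (\<gamma> has_vector_derivative T (\<gamma> t)) (at t within {0..\<delta>})"
    using tangent_field_integral_curve[OF sub T_smooth T_tangent \<open>x \<in> M\<close>] by blast
  have future: "chron M D g T x (\<gamma> \<delta>)"
    using chron_along_time_orientation[where M = M and D = D and g = g and T = T and \<gamma> = \<gamma>,
        OF timelike \<gamma>(1,3,4,5)] \<gamma>(2)
    by simp
  \<comment> \<open>A past-directed point comes from the integral curve of \<open>-T\<close>, run backwards.\<close>
  obtain \<delta>' \<eta> where \<eta>: "\<delta>' > 0" "\<eta> 0 = x" "\<eta> ` {0..\<delta>'} \<subseteq> M" "continuous_on {0..\<delta>'} (\<lambda>t. - T (\<eta> t))"
      "\<And>t. t \<in> {0..\<delta>'} \<Longrightarrow> (\<eta> has_vector_derivative - T (\<eta> t)) (at t within {0..\<delta>'})"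
    using tangent_field_integral_curve[OF sub smooth_fun_on_uminus[OF T_smooth]
        tangent_space_uminus[OF T_tangent] \<open>x \<in> M\<close>] by blast
  define \<beta> where "\<beta> t = \<eta> (- t)" for t
  have reflect: "uminus ` {- \<delta>'..0} = {0..\<delta>'}" by auto
  have "chron M D g T (\<beta> (- \<delta>')) (\<beta> 0)"
  proof (rule chron_along_time_orientation[where M = M and D = D and g = g and T = T and \<gamma> = \<beta>,
        OF timelike])
    show "- \<delta>' < 0" using \<eta>(1) by simp
    show "\<beta> ` {- \<delta>'..0} \<subseteq> M" using \<eta>(3) by (auto simp: \<beta>_def)
    have "continuous_on {- \<delta>'..0} (\<lambda>t. - (- T (\<eta> (- t))))"
      by (intro continuous_intros continuous_on_compose2[OF \<eta>(4)]) auto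
    then show "continuous_on {- \<delta>'..0} (\<lambda>t. T (\<beta> t))" by (simp add: \<beta>_def)
    fix t assume t: "t \<in> {- \<delta>'..0}"
    have "(uminus has_vector_derivative -1) (at t within {- \<delta>'..0})"
      by (auto intro!: derivative_eq_intros simp: has_vector_derivative_def)
    moreover have "(\<eta> has_vector_derivative - T (\<eta> (- t))) (at (- t) within uminus ` {- \<delta>'..0})"
      unfolding reflect using \<eta>(5)[of "- t"] t by auto
    ultimately show "(\<beta> has_vector_derivative T (\<beta> t)) (at t within {- \<delta>'..0})"
      using vector_diff_chain_within unfolding \<beta>_def o_def by fastforce
  qed
  then have past: "chron M D g T (\<beta> (- \<delta>')) x" using \<eta>(2) by (simp add: \<beta>_def)
  from past future show ?thesis by (rule that)
qed

definition chronological_diamonds :: "'e::euclidean_space set \<Rightarrow> ('e \<Rightarrow> 'e set) \<Rightarrow>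
    ('e \<Rightarrow> 'e \<Rightarrow> 'e \<Rightarrow> real) \<Rightarrow> ('e \<Rightarrow> 'e) \<Rightarrow> 'e set set" where
  "chronological_diamonds M D g T = {Ifut M D g T p \<inter> Ipast M D g T q | p q. p \<in> M \<and> q \<in> M}"

lemma chronological_diamonds_refine:
  assumes "chronologically_open M D g T"
    and "x \<in> (Ifut M D g T p1 \<inter> Ipast M D g T q1) \<inter> (Ifut M D g T p2 \<inter> Ipast M D g T q2)"
    and "p1 \<in> M" "p2 \<in> M" "q1 \<in> M" "q2 \<in> M"
  obtains p q where "p \<in> M" "q \<in> M" "x \<in> Ifut M D g T p \<inter> Ipast M D g T q"
    "Ifut M D g T p \<inter> Ipast M D g T q \<subseteq> (Ifut M D g T p1 \<inter> Ipast M D g T q1) \<inter> (Ifut M D g T p2 \<inter> Ipast M D g T q2)"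
proof -
  have x: "chron M D g T p1 x" "chron M D g T p2 x" "chron M D g T x q1" "chron M D g T x q2"
    using assms(2) unfolding Ifut_def Ipast_def by auto
  have "openin (top_of_set M) (Ifut M D g T p1 \<inter> Ifut M D g T p2)"
    "openin (top_of_set M) (Ipast M D g T q1 \<inter> Ipast M D g T q2)"
    using assms(1,3-6) unfolding chronologically_open_def by (blast intro: openin_Int)+
  then obtain G H where G: "open G" "Ifut M D g T p1 \<inter> Ifut M D g T p2 = M \<inter> G"
    and H: "open H" "Ipast M D g T q1 \<inter> Ipast M D g T q2 = M \<inter> H"
    unfolding openin_open by blast
  \<comment> \<open>Points slightly earlier and later on timelike curves through \<open>x\<close> still lie in both futures, resp. pasts.\<close>
  have "x \<in> G" "x \<in> H" using assms(2) G(2) H(2) by blast+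
  obtain p where p: "p \<in> M \<inter> G" "chron M D g T p x"
    using chron_through_open[OF x(1) G(1)] \<open>x \<in> G\<close> by blast
  obtain q where q: "q \<in> M \<inter> H" "chron M D g T x q"
    using chron_through_open[OF x(3) H(1)] \<open>x \<in> H\<close> by blast
  have p_later: "chron M D g T p1 p" "chron M D g T p2 p"
    and q_earlier: "chron M D g T q q1" "chron M D g T q q2"
    using p(1) q(1) G(2) H(2) unfolding Ifut_def Ipast_def by blast+
  show ?thesis
  proof (rule that)
    show "p \<in> M" "q \<in> M" using p(1) q(1) by auto
    show "x \<in> Ifut M D g T p \<inter> Ipast M D g T q" using p(2) q(2) by (simp add: Ifut_def Ipast_def)
    show "Ifut M D g T p \<inter> Ipast M D g T q \<subseteq>
        (Ifut M D g T p1 \<inter> Ipast M D g T q1) \<inter> (Ifut M D g T p2 \<inter> Ipast M D g T q2)"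
    proof
      fix z assume "z \<in> Ifut M D g T p \<inter> Ipast M D g T q"
      then have "chron M D g T p z" "chron M D g T z q" by (simp_all add: Ifut_def Ipast_def)
      then show "z \<in> (Ifut M D g T p1 \<inter> Ipast M D g T q1) \<inter> (Ifut M D g T p2 \<inter> Ipast M D g T q2)"
        using p_later q_earlier chron_trans unfolding Ifut_def Ipast_def by blast
    qed
  qed
qed

lemma chronological_diamonds_local_base:
  assumes "chronologically_open M D g T"
    and "S \<in> chronological_diamonds M D g T" "S' \<in> chronological_diamonds M D g T" "x \<in> S \<inter> S'"
  shows "\<exists>W\<in>chronological_diamonds M D g T. x \<in> W \<and> W \<subseteq> S \<inter> S'"
proof -
  obtain p1 q1 p2 q2 where "S = Ifut M D g T p1 \<inter> Ipast M D g T q1" "S' = Ifut M D g T p2 \<inter> Ipast M D g T q2"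
    and "p1 \<in> M" "q1 \<in> M" "p2 \<in> M" "q2 \<in> M"
    using assms(2,3) unfolding chronological_diamonds_def by blast
  then obtain p q where "p \<in> M" "q \<in> M" "x \<in> Ifut M D g T p \<inter> Ipast M D g T q"
      "Ifut M D g T p \<inter> Ipast M D g T q \<subseteq> S \<inter> S'"
    using chronological_diamonds_refine[OF assms(1), of x p1 q1 p2 q2] assms(4) by blast
  then show ?thesis unfolding chronological_diamonds_def by blast
qed

lemma Union_chronological_diamonds:
  assumes "sub_space_time TYPE('d::euclidean_space) M D k g T"
  shows "\<Union>(chronological_diamonds M D g T) = M"
proof
  show "\<Union>(chronological_diamonds M D g T) \<subseteq> M"
    unfolding chronological_diamonds_def Ifut_def by (auto dest: chron_imp_mem)
  show "M \<subseteq> \<Union>(chronological_diamonds M D g T)"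
  proof
    fix x assume "x \<in> M"
    then obtain a b where ab: "chron M D g T a x" "chron M D g T x b"
      using sub_space_time_chron_through[OF assms] by blast
    then have "Ifut M D g T a \<inter> Ipast M D g T b \<in> chronological_diamonds M D g T"
      unfolding chronological_diamonds_def using chron_imp_mem by blast
    moreover have "x \<in> Ifut M D g T a \<inter> Ipast M D g T b"
      using ab by (simp add: Ifut_def Ipast_def)
    ultimately show "x \<in> \<Union>(chronological_diamonds M D g T)" by blast
  qed
qed

theorem lemma3p7:
  fixes M :: "'e::euclidean_space set" and D :: "'e \<Rightarrow> 'e set" and k :: nat
    and g :: "'e \<Rightarrow> 'e \<Rightarrow> 'e \<Rightarrow> real" and T :: "'e \<Rightarrow> 'e"
  assumes "sub_space_time TYPE('d::euclidean_space) M D k g T"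
    and "chronologically_open M D g T"
  shows "\<exists>X :: 'e topology. topspace X = M \<and>
           (\<forall>p\<in>M. \<forall>q\<in>M. openin X (Ifut M D g T p \<inter> Ipast M D g T q)) \<and>
           (\<forall>U. openin X U \<longrightarrow>
              (\<exists>\<B>. \<B> \<subseteq> {Ifut M D g T p \<inter> Ipast M D g T q | p q. p \<in> M \<and> q \<in> M} \<and> \<Union>\<B> = U))"
proof -
  obtain X where X: "topspace X = \<Union>(chronological_diamonds M D g T)"
      "\<forall>W\<in>chronological_diamonds M D g T. openin X W"
      "\<forall>U. openin X U \<longrightarrow> (\<exists>\<U>\<subseteq>chronological_diamonds M D g T. \<Union>\<U> = U)"
    using topology_from_local_base[OF chronological_diamonds_local_base[OF assms(2)]] by blast
  have "topspace X = M" using X(1) Union_chronological_diamonds[OF assms(1)] by simp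
  moreover have "\<forall>p\<in>M. \<forall>q\<in>M. openin X (Ifut M D g T p \<inter> Ipast M D g T q)"
    using X(2) unfolding chronological_diamonds_def by blast
  ultimately show ?thesis using X(3) unfolding chronological_diamonds_def by blast
qed

end
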